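(* For every $n\geq 3$ we have $P_h(\ast_n)=\{2,3,4,\ldots\}\cup\{+\infty\}$.
   Context: For $n\geq 3$, the star graph $\ast_n$ is the topological graph with $n+1$ vertices $0,1,\ldots,n$ and $n$ edges $[0,1],[0,2],\ldots,[0,n]$, i.e. the union of $n$ arcs, the $i$-th having end points $0$ and $i$, any two of which meet only at the common end point $0$. For a topological space $A$, $Homeo(A)$ denotes the group of all homeomorphisms $A\to A$ under composition. For a subgroup $G$ of $Homeo(A)$ (acting by $gx=g(x)$), a nonempty subset $Y\subseteq A$ is invariant if $g(y)\in Y$ for all $g\in G$, $y\in Y$. The height of $(G,A)$ is $h(G,A)=\sup\{n\geq 0:$ there exist distinct closed invariant subsets $Y_0\subset Y_1\subset\cdots\subset Y_n=A\}$ (possibly $+\infty$). Finally $P_h(A)=\{h(G,A): G \text{ is a subgroup of } Homeo(A)\}$. *)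

theory Defs
  imports "HOL-Analysis.Analysis" "HOL-Library.Extended_Nat"
begin

definition star_graph :: "nat \<Rightarrow> complex set" where
  "star_graph n = (\<Union>k<n. closed_segment 0 (cis (2 * pi * real k / real n)))"

text \<open>Homeomorphisms of A, each represented canonically as a map that is the
  identity outside A.\<close>
definition Homeo :: "'a::topological_space set \<Rightarrow> ('a \<Rightarrow> 'a) set" where
  "Homeo A = {f. (\<exists>g. homeomorphism A A f g) \<and> (\<forall>x. x \<notin> A \<longrightarrow> f x = x)}"

definition homeo_inv :: "'a set \<Rightarrow> ('a \<Rightarrow> 'a) \<Rightarrow> ('a \<Rightarrow> 'a)" where
  "homeo_inv A f = (\<lambda>x. if x \<in> A then inv_into A f x else x)"

definition homeo_subgroup :: "'a::topological_space set \<Rightarrow> ('a \<Rightarrow> 'a) set \<Rightarrow> bool" where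
  "homeo_subgroup A G \<longleftrightarrow> G \<subseteq> Homeo A \<and> (\<lambda>x. x) \<in> G
     \<and> (\<forall>f\<in>G. \<forall>g\<in>G. f \<circ> g \<in> G) \<and> (\<forall>f\<in>G. homeo_inv A f \<in> G)"

definition invariant_set :: "('a \<Rightarrow> 'a) set \<Rightarrow> 'a set \<Rightarrow> bool" where
  "invariant_set G Y \<longleftrightarrow> Y \<noteq> {} \<and> (\<forall>g\<in>G. \<forall>y\<in>Y. g y \<in> Y)"

definition height :: "'a::topological_space set \<Rightarrow> ('a \<Rightarrow> 'a) set \<Rightarrow> enat" where
  "height A G = Sup {enat n | n. \<exists>Y :: nat \<Rightarrow> 'a set.
      (\<forall>i\<le>n. Y i \<subseteq> A \<and> closedin (top_of_set A) (Y i) \<and> invariant_set G (Y i))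
      \<and> (\<forall>i<n. Y i \<subset> Y (Suc i)) \<and> Y n = A}"

definition P_h :: "'a::topological_space set \<Rightarrow> enat set" where
  "P_h A = {height A G | G. homeo_subgroup A G}"

end

(*
  Every homeomorphism of the star fixes the centre (the only point whose complement is not a
  union of two connected sets, as n >= 3) and permutes the tips (the points whose complement
  stays connected), so {0}, {0} with the tips, and the whole star form a chain of closed
  invariant sets: every height is at least 2. The trivial group has height infinity, since
  all finite sets are closed and invariant.

  For a finite height k = 2m + b (b = 0 or 1) take the rotations of the arms combined with a
  radial homeomorphism applied to every arm, the radial part ranging over the increasing
  homeomorphisms of [0, 1] that fix the grid points i/m and, if b = 1, preserve a set of
  marks in (0, 1/m) which is Z in logit coordinates. Closed invariant sets then correspond to
  closed invariant subsets of [0, 1]. These are unions of the 2m + 1 + b orbits (grid points,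
  open cells, marks and unmarked points), which gives the upper bound, and a chain adding
  grid points, then the marks, then cells one at a time attains it.
*)
theory Submission
  imports Defs
begin

section \<open>The star graph\<close>

definition zeta :: "nat \<Rightarrow> complex" where
  "zeta n = cis (2 * pi / real n)"

lemma zeta_power: "zeta n ^ k = cis (2 * pi * real k / real n)"
proof -
  have "zeta n ^ k = cis (real k * (2 * pi / real n))"
    by (simp only: zeta_def Complex.DeMoivre)
  also have "real k * (2 * pi / real n) = 2 * pi * real k / real n"
    by simp
  finally show ?thesis .
qed

lemma norm_zeta_power [simp]: "cmod (zeta n ^ k) = 1"
  by (simp add: zeta_power)

lemma zeta_nonzero [simp]: "zeta n \<noteq> 0"
  by (simp add: zeta_def)

lemma zeta_power_mod:
  assumes "n > 0"
  shows "zeta n ^ k = zeta n ^ (k mod n)"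
proof -
  have "zeta n ^ k = zeta n ^ (n * (k div n) + k mod n)"
    by simp
  also have "\<dots> = (zeta n ^ n) ^ (k div n) * zeta n ^ (k mod n)"
    by (simp only: power_add power_mult)
  finally have "zeta n ^ k = (zeta n ^ n) ^ (k div n) * zeta n ^ (k mod n)" .
  moreover have "zeta n ^ n = 1"
    using assms by (simp add: zeta_power)
  ultimately show ?thesis by simp
qed

lemma zeta_power_eq_iff:
  assumes n: "n > 0"
  shows "zeta n ^ j = zeta n ^ k \<longleftrightarrow> j mod n = k mod n"
proof
  assume "zeta n ^ j = zeta n ^ k"
  then have "exp (\<i> * complex_of_real (2*pi*real j / real n)) = exp (\<i> * complex_of_real (2*pi*real k / real n))"
    by (simp add: zeta_power cis_conv_exp)
  then obtain N :: int where "\<i> * complex_of_real (2*pi*real j / real n) =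
      \<i> * complex_of_real (2*pi*real k / real n) + (of_int (2 * N) * pi) * \<i>"
    by (auto simp: exp_eq)
  then have "2*pi*real j / real n = 2*pi*real k / real n + 2 * N * pi"
    by (simp add: complex_eq_iff)
  then have "pi * (real j * 2) = pi * (real_of_int N * 2 * real n + real k * 2)"
    using n by (simp add: field_simps)
  then have "real_of_int (int j) = real_of_int (int k + N * int n)"
    by simp
  then have "int j = int k + N * int n"
    by (simp only: of_int_eq_iff)
  then have "int (j mod n) = int (k mod n)"
    by (simp only: zmod_int) simp
  then show "j mod n = k mod n"
    by (simp only: of_nat_eq_iff)
next
  assume jk: "j mod n = k mod n"
  have "zeta n ^ j = zeta n ^ (j mod n)"
    by (rule zeta_power_mod[OF n])
  also have "\<dots> = zeta n ^ k"
    by (simp only: jk zeta_power_mod[OF n, of k, symmetric])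
  finally show "zeta n ^ j = zeta n ^ k" .
qed

definition arm :: "nat \<Rightarrow> nat \<Rightarrow> complex set" where
  "arm n k = closed_segment 0 (zeta n ^ k)"

lemma arm_eq: "arm n k = {complex_of_real t * zeta n ^ k | t. 0 \<le> t \<and> t \<le> 1}"
  by (auto simp: arm_def closed_segment_def scaleR_conv_of_real)

lemma star_graph_eq_arms: "star_graph n = (\<Union>k<n. arm n k)"
  by (simp add: star_graph_def arm_def zeta_power)

lemma norm_of_real_mult_zeta_power [simp]: "0 \<le> t \<Longrightarrow> cmod (complex_of_real t * zeta n ^ k) = t"
  by (simp add: norm_mult)

lemma closed_arm [simp]: "closed (arm n k)"
  by (simp add: arm_def)

lemma arm_subset_star_graph: "k < n \<Longrightarrow> arm n k \<subseteq> star_graph n"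
  by (auto simp: star_graph_eq_arms)

lemma star_graphI [intro]:
  assumes "n > 0" "0 \<le> t" "t \<le> 1"
  shows "complex_of_real t * zeta n ^ k \<in> star_graph n"
proof -
  have "complex_of_real t * zeta n ^ k \<in> arm n (k mod n)"
    using assms zeta_power_mod[OF assms(1), of k] by (auto simp: arm_eq)
  then show ?thesis
    using assms(1) by (auto simp: star_graph_eq_arms)
qed

lemma star_graphE:
  assumes "z \<in> star_graph n"
  obtains t k where "0 \<le> t" "t \<le> 1" "k < n" "z = complex_of_real t * zeta n ^ k"
  using assms by (auto simp: star_graph_eq_arms arm_eq)

lemma zero_in_star_graph [simp]: "n > 0 \<Longrightarrow> 0 \<in> star_graph n"
  using star_graphI[of n 0 0] by simp

lemma zeta_power_in_star_graph [simp]: "n > 0 \<Longrightarrow> zeta n ^ k \<in> star_graph n"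
  using star_graphI[of n 1 k] by simp

lemma star_graph_polar_eq_iff:
  assumes "n > 0" "0 < t" "0 \<le> s"
  shows "complex_of_real t * zeta n ^ j = complex_of_real s * zeta n ^ k \<longleftrightarrow> t = s \<and> j mod n = k mod n"
proof
  assume e: "complex_of_real t * zeta n ^ j = complex_of_real s * zeta n ^ k"
  have "cmod (complex_of_real t * zeta n ^ j) = cmod (complex_of_real s * zeta n ^ k)"
    by (simp only: e)
  then have "t = s"
    using assms by simp
  with e assms show "t = s \<and> j mod n = k mod n"
    by (simp add: zeta_power_eq_iff)
qed (use assms zeta_power_eq_iff in auto)

lemma arm_Int_arm:
  assumes "j < n" "k < n" "j \<noteq> k" "z \<in> arm n j" "z \<in> arm n k"
  shows "z = 0"
proof -
  obtain t where t: "0 \<le> t" "z = complex_of_real t * zeta n ^ j"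
    using assms(4) by (auto simp: arm_eq)
  obtain s where s: "0 \<le> s" "z = complex_of_real s * zeta n ^ k"
    using assms(5) by (auto simp: arm_eq)
  show ?thesis
  proof (cases "t = 0")
    case False
    then have "j mod n = k mod n"
      using star_graph_polar_eq_iff[of n t s j k] assms t s by auto
    with assms show ?thesis by simp
  qed (use t in simp)
qed

lemma zeta_power_in_arm_iff:
  assumes "j < n" "k < n"
  shows "zeta n ^ j \<in> arm n k \<longleftrightarrow> j = k"
proof
  assume "zeta n ^ j \<in> arm n k"
  then show "j = k"
    using arm_Int_arm[OF assms, of "zeta n ^ j"] by (auto simp: arm_def)
qed (simp add: arm_def)

lemma compact_star_graph: "compact (star_graph n)"
  by (auto simp: star_graph_eq_arms arm_def)

section \<open>Homeomorphisms of the star graph\<close>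

lemma connected_subset_arm:
  assumes n: "n > 0" and K: "connected K" "K \<subseteq> star_graph n - {0}" "K \<noteq> {}"
  obtains k where "k < n" "K \<subseteq> arm n k"
proof -
  obtain x where x: "x \<in> K"
    using K(3) by blast
  then obtain k where k: "k < n" "x \<in> arm n k"
    using K(2) by (auto simp: star_graph_eq_arms)
  let ?B = "\<Union>j\<in>{..<n} - {k}. arm n j"
  have "arm n k \<inter> ?B \<inter> K = {}"
    using K(2) arm_Int_arm[OF _ k(1)] by blast
  moreover have "K \<subseteq> arm n k \<union> ?B"
    using K(2) by (auto simp: star_graph_eq_arms)
  moreover have "closed ?B"
    by (intro closed_UN) auto
  ultimately have "arm n k \<inter> K = {} \<or> ?B \<inter> K = {}"
    using connected_closedD[OF K(1)] by simp
  then have "K \<subseteq> arm n k"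
    using x k \<open>K \<subseteq> arm n k \<union> ?B\<close> by blast
  with k that show thesis by blast
qed

lemma star_graph_minus_outer_segment_eq:
  assumes n: "n > 0" and k: "k < n" and t: "0 < t" "t \<le> 1"
  shows "star_graph n - (\<lambda>s. complex_of_real s * zeta n ^ k) ` {t..1}
    = \<Union>(insert ((\<lambda>s. complex_of_real s * zeta n ^ k) ` {0..<t}) (arm n ` ({..<n} - {k})))"
    (is "_ = \<Union>?F")
proof -
  let ?ray = "\<lambda>I. (\<lambda>s. complex_of_real s * zeta n ^ k) ` I"
  show ?thesis
  proof
    show "star_graph n - ?ray {t..1} \<subseteq> \<Union>?F"
    proof
      fix z assume z: "z \<in> star_graph n - ?ray {t..1}"
      then obtain j where j: "j < n" "z \<in> arm n j"
        by (auto simp: star_graph_eq_arms)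
      show "z \<in> \<Union>?F"
      proof (cases "j = k")
        case True
        then obtain s where "0 \<le> s" "s \<le> 1" "z = complex_of_real s * zeta n ^ k"
          using j by (auto simp: arm_eq)
        with z t show ?thesis
          by (cases "s < t") auto
      qed (use j in auto)
    qed
    have "?ray {0..<t} \<subseteq> star_graph n - ?ray {t..1}"
    proof
      fix z assume "z \<in> ?ray {0..<t}"
      then obtain s where s: "0 \<le> s" "s < t" "z = complex_of_real s * zeta n ^ k"
        by auto
      then have "cmod z \<notin> {t..1}"
        by simp
      moreover have "z \<in> star_graph n"
        unfolding s(3) using s t n by (intro star_graphI) auto
      ultimately show "z \<in> star_graph n - ?ray {t..1}"
        using t by auto
    qed
    moreover have "arm n j \<subseteq> star_graph n - ?ray {t..1}" if "j < n" "j \<noteq> k" for j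
    proof -
      have ray_arm: "?ray {t..1} \<subseteq> arm n k"
        using t by (auto simp: arm_eq)
      have "z \<notin> ?ray {t..1}" if "z \<in> arm n j" for z
      proof
        assume z: "z \<in> ?ray {t..1}"
        then have "z = 0"
          using that ray_arm arm_Int_arm[OF \<open>j < n\<close> k \<open>j \<noteq> k\<close>] by blast
        with z t show False
          by auto
      qed
      then show ?thesis
        using arm_subset_star_graph[OF that(1)] by blast
    qed
    ultimately show "\<Union>?F \<subseteq> star_graph n - ?ray {t..1}"
      by blast
  qed
qed

lemma connected_star_graph_minus_outer_segment:
  assumes n: "n > 0" and k: "k < n" and t: "0 < t" "t \<le> 1"
  shows "connected (star_graph n - (\<lambda>s. complex_of_real s * zeta n ^ k) ` {t..1})"
proof -
  let ?ray = "\<lambda>I. (\<lambda>s. complex_of_real s * zeta n ^ k) ` I"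
  let ?F = "insert (?ray {0..<t}) (arm n ` ({..<n} - {k}))"
  have "connected (\<Union>?F)"
  proof (rule connected_Union)
    have "0 \<in> ?ray {0..<t}"
      using t by (auto simp: image_iff intro!: bexI[of _ 0])
    then show "\<Inter>?F \<noteq> {}"
      by (auto simp: arm_def)
  qed (auto simp: arm_def intro!: connected_continuous_image continuous_intros)
  then show ?thesis
    using star_graph_minus_outer_segment_eq[OF assms] by simp
qed

lemma star_graph_minus_point_Un_connected:
  assumes n: "n > 0" and p: "p \<in> star_graph n" "p \<noteq> 0"
  obtains A B where "connected A" "connected B" "star_graph n - {p} = A \<union> B"
proof -
  obtain t k where tk: "0 \<le> t" "t \<le> 1" "k < n" "p = complex_of_real t * zeta n ^ k"
    using p(1) by (rule star_graphE)
  have t: "0 < t"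
    using tk p(2) by (cases "t = 0") auto
  let ?ray = "\<lambda>I. (\<lambda>s. complex_of_real s * zeta n ^ k) ` I"
  have "?ray {t<..1} \<subseteq> star_graph n - {p}"
  proof
    fix z assume "z \<in> ?ray {t<..1}"
    then obtain s where s: "t < s" "s \<le> 1" "z = complex_of_real s * zeta n ^ k"
      by auto
    then have "cmod z \<noteq> cmod p"
      using tk by simp
    moreover have "z \<in> star_graph n"
      unfolding s(3) using s t n by (intro star_graphI) auto
    ultimately show "z \<in> star_graph n - {p}"
      by auto
  qed
  moreover have "p \<in> ?ray {t..1}"
    using tk by auto
  moreover have "?ray {t..1} \<subseteq> ?ray {t<..1} \<union> {p}"
    using tk by (auto simp: image_iff)
  ultimately have "star_graph n - {p} = ?ray {t<..1} \<union> (star_graph n - ?ray {t..1})"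
    by auto
  moreover have "connected (?ray {t<..1})"
    by (intro connected_continuous_image continuous_intros) simp
  ultimately show thesis
    using that connected_star_graph_minus_outer_segment[OF n tk(3) t tk(2)] by blast
qed

lemma star_graph_minus_centre_not_Un_connected:
  assumes n: "n \<ge> 3" and AB: "connected A" "connected B" "star_graph n - {0} = A \<union> B"
  shows False
proof -
  have within_arm: "\<exists>a<n. X \<subseteq> arm n a" if "connected X" "X \<subseteq> star_graph n - {0}" for X
  proof (cases "X = {}")
    case False
    have "n > 0"
      using n by simp
    from connected_subset_arm[OF this that False] show ?thesis
      by blast
  next
    case True
    then show ?thesis
      using n by (intro exI[of _ 0]) simp
  qed
  obtain a b where ab: "a < n" "b < n" "A \<subseteq> arm n a" "B \<subseteq> arm n b"
    using within_arm[of A] within_arm[of B] AB by blast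
  have covered: "j = a \<or> j = b" if "j < n" for j
  proof -
    have "zeta n ^ j \<in> star_graph n - {0}"
      using that by simp
    then have "zeta n ^ j \<in> arm n a \<or> zeta n ^ j \<in> arm n b"
      using AB(3) ab by blast
    then show ?thesis
      using zeta_power_in_arm_iff that ab by blast
  qed
  then have "0 = a \<or> 0 = b" "1 = a \<or> 1 = b" "2 = a \<or> 2 = b"
    using covered[of 0] covered[of 1] covered[of 2] n by simp_all
  then show False
    by auto
qed

lemma homeomorphism_image_Diff_point:
  assumes "homeomorphism S T f g" "p \<in> S"
  shows "f ` (S - {p}) = T - {f p}"
proof -
  have "inj_on f S"
    using assms(1) by (metis homeomorphism_apply1 inj_on_inverseI)
  then show ?thesis
    using assms by (simp add: inj_on_image_set_diff homeomorphism_image1)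
qed

lemma star_graph_homeomorphism_fixes_centre:
  assumes n: "n \<ge> 3" and h: "homeomorphism (star_graph n) (star_graph n) f g"
  shows "f 0 = 0"
proof (rule ccontr)
  let ?S = "star_graph n"
  have n0: "n > 0"
    using n by simp
  have g: "homeomorphism ?S ?S g f"
    using h by (rule homeomorphism_symD)
  have connected_image: "connected (g ` X)" if "connected X" "X \<subseteq> ?S" for X
    by (rule connected_continuous_image[OF continuous_on_subset[OF homeomorphism_cont1[OF g] that(2)] that(1)])
  assume f0_ne: "f 0 \<noteq> 0"
  have f0: "f 0 \<in> ?S"
    using homeomorphism_image1[OF h] zero_in_star_graph[OF n0] by blast
  obtain A B where AB: "connected A" "connected B" "?S - {f 0} = A \<union> B"
    using star_graph_minus_point_Un_connected[OF n0 f0 f0_ne] by blast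
  have "g ` (?S - {f 0}) = ?S - {g (f 0)}"
    by (rule homeomorphism_image_Diff_point[OF g f0])
  then have "?S - {0} = g ` A \<union> g ` B"
    using AB(3) homeomorphism_apply1[OF h zero_in_star_graph[OF n0]] by (simp add: image_Un)
  moreover have "A \<subseteq> ?S" "B \<subseteq> ?S"
    using AB(3) by blast+
  then have "connected (g ` A)" "connected (g ` B)"
    using AB(1,2) connected_image by simp_all
  ultimately show False
    by (intro star_graph_minus_centre_not_Un_connected[OF n, of "g ` A" "g ` B"])
qed

definition tips :: "nat \<Rightarrow> complex set" where
  "tips n = (\<lambda>k. zeta n ^ k) ` {..<n}"

lemma tips_subset_star_graph: "n > 0 \<Longrightarrow> tips n \<subseteq> star_graph n"
  by (auto simp: tips_def)

lemma connected_star_graph_minus_tip: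
  assumes "n > 0" "p \<in> tips n"
  shows "connected (star_graph n - {p})"
proof -
  obtain k where k: "k < n" "p = zeta n ^ k"
    using assms(2) by (auto simp: tips_def)
  then have "(\<lambda>s. complex_of_real s * zeta n ^ k) ` {1..1} = {p}"
    by simp
  then show ?thesis
    using connected_star_graph_minus_outer_segment[OF assms(1) k(1), of 1] by simp
qed

lemma star_graph_minus_interior_point_disconnected:
  assumes n: "n > 0" and k: "k < n" and r: "0 < r" "r < 1"
  shows "\<not> connected (star_graph n - {complex_of_real r * zeta n ^ k})"
proof
  let ?p = "complex_of_real r * zeta n ^ k"
  let ?S = "star_graph n - {?p}"
  let ?outer = "(\<lambda>s. complex_of_real s * zeta n ^ k) ` {r..1}"
  let ?inner = "(star_graph n \<inter> cball 0 r) \<union> (\<Union>j\<in>{..<n} - {k}. arm n j)"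
  assume "connected ?S"
  moreover have "?outer \<inter> ?inner \<inter> ?S = {}"
  proof -
    have "z = ?p" if outer: "z \<in> ?outer" and inner: "z \<in> ?inner" for z
    proof -
      obtain s where s: "r \<le> s" "s \<le> 1" "z = complex_of_real s * zeta n ^ k"
        using outer by auto
      have zk: "z \<in> arm n k"
        using s r by (auto simp: arm_eq)
      have "z \<notin> arm n j" if "j < n" "j \<noteq> k" for j
      proof
        assume "z \<in> arm n j"
        then have "z = 0"
          using arm_Int_arm[OF that(1) k that(2) _ zk] by blast
        then show False
          using s r by simp
      qed
      then have "cmod z \<le> r"
        using inner by auto
      then show ?thesis
        using s r by simp
    qed
    then show ?thesis
      by blast
  qed
  moreover have "?S \<subseteq> ?outer \<union> ?inner"
  proof
    fix z assume z: "z \<in> ?S"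
    then obtain s j where sj: "0 \<le> s" "s \<le> 1" "j < n" "z = complex_of_real s * zeta n ^ j"
      by (auto elim: star_graphE)
    show "z \<in> ?outer \<union> ?inner"
    proof (cases "j = k \<and> r \<le> s")
      case False
      then have "j \<noteq> k \<or> s \<le> r"
        by auto
      then show ?thesis
        using sj z by (auto simp: arm_eq)
    qed (use sj in auto)
  qed
  moreover have "closed ?outer"
    by (intro compact_imp_closed compact_continuous_image continuous_intros) simp
  moreover have "closed ?inner"
    by (intro closed_Un closed_Int compact_imp_closed compact_star_graph closed_UN) auto
  ultimately have "?outer \<inter> ?S = {} \<or> ?inner \<inter> ?S = {}"
    by (rule connected_closedD)
  moreover have "zeta n ^ k \<in> ?outer \<inter> ?S"
    using n r by (auto simp: image_iff intro!: bexI[of _ 1])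
  moreover have "0 \<in> ?inner \<inter> ?S"
    using n r by simp
  ultimately show False
    by blast
qed

lemma mem_tips_iff_connected:
  assumes n: "n \<ge> 3" and p: "p \<in> star_graph n"
  shows "p \<in> tips n \<longleftrightarrow> connected (star_graph n - {p})"
proof
  assume "connected (star_graph n - {p})"
  obtain t k where tk: "0 \<le> t" "t \<le> 1" "k < n" "p = complex_of_real t * zeta n ^ k"
    using p by (rule star_graphE)
  moreover have "t \<noteq> 0"
    using star_graph_minus_centre_not_Un_connected[OF n] \<open>connected _\<close> tk(4) by fastforce
  moreover have "\<not> (0 < t \<and> t < 1)"
  proof
    assume "0 < t \<and> t < 1"
    then have "\<not> connected (star_graph n - {p})"
      using star_graph_minus_interior_point_disconnected[of n k t] tk n by simp
    then show False
      using \<open>connected _\<close> by contradiction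
  qed
  ultimately have "t = 1"
    by linarith
  with tk show "p \<in> tips n"
    by (auto simp: tips_def)
qed (use n connected_star_graph_minus_tip in auto)

lemma star_graph_homeomorphism_maps_tips:
  assumes n: "n \<ge> 3" and h: "homeomorphism (star_graph n) (star_graph n) f g" and p: "p \<in> tips n"
  shows "f p \<in> tips n"
proof -
  have pS: "p \<in> star_graph n"
    using p tips_subset_star_graph[of n] n by auto
  have "connected (f ` (star_graph n - {p}))"
    using mem_tips_iff_connected[OF n pS] p homeomorphism_cont1[OF h]
    by (metis Diff_subset connected_continuous_image continuous_on_subset)
  moreover have "f p \<in> star_graph n"
    using homeomorphism_image1[OF h] pS by blast
  ultimately show ?thesis
    using mem_tips_iff_connected[OF n] homeomorphism_image_Diff_point[OF h pS] by simp
qed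

section \<open>Height\<close>

definition invariant_chain ::
    "'a::topological_space set \<Rightarrow> ('a \<Rightarrow> 'a) set \<Rightarrow> nat \<Rightarrow> (nat \<Rightarrow> 'a set) \<Rightarrow> bool" where
  "invariant_chain A G N Y \<longleftrightarrow>
     (\<forall>i\<le>N. Y i \<subseteq> A \<and> closedin (top_of_set A) (Y i) \<and> invariant_set G (Y i))
     \<and> (\<forall>i<N. Y i \<subset> Y (Suc i))"

lemma height_eq_Sup_invariant_chain:
  "height A G = Sup {enat N | N. \<exists>Y. invariant_chain A G N Y \<and> Y N = A}"
  unfolding height_def invariant_chain_def by simp

lemma enat_le_height: "invariant_chain A G N Y \<Longrightarrow> Y N = A \<Longrightarrow> enat N \<le> height A G"
  unfolding height_eq_Sup_invariant_chain by (rule Sup_upper) blast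

lemma height_le_enat:
  "(\<And>N Y. invariant_chain A G N Y \<Longrightarrow> N \<le> K) \<Longrightarrow> height A G \<le> enat K"
  unfolding height_eq_Sup_invariant_chain by (rule Sup_least) auto

lemma height_eq_infinity:
  assumes "\<And>N. \<exists>Y. invariant_chain A G N Y \<and> Y N = A"
  shows "height A G = \<infinity>"
proof (rule ccontr)
  assume "height A G \<noteq> \<infinity>"
  then obtain K where K: "height A G = enat K"
    by auto
  obtain Y where "invariant_chain A G (Suc K) Y" "Y (Suc K) = A"
    using assms by blast
  then have "enat (Suc K) \<le> height A G"
    by (rule enat_le_height)
  with K show False
    by simp
qed

lemma invariant_chain_0:
  assumes "S \<subseteq> A" "closedin (top_of_set A) S" "invariant_set G S"
  shows "\<exists>Y. invariant_chain A G 0 Y \<and> Y 0 = S"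
  using assms by (intro exI[of _ "\<lambda>_. S"]) (simp add: invariant_chain_def)

lemma invariant_chain_Suc:
  assumes "\<exists>Y. invariant_chain A G N Y \<and> Y N = S" "S \<subset> S'"
    and "S' \<subseteq> A" "closedin (top_of_set A) S'" "invariant_set G S'"
  shows "\<exists>Y. invariant_chain A G (Suc N) Y \<and> Y (Suc N) = S'"
proof -
  obtain Y where "invariant_chain A G N Y" "Y N = S"
    using assms(1) by blast
  then have "invariant_chain A G (Suc N) (Y(Suc N := S'))"
    using assms(2-) by (auto simp: invariant_chain_def le_Suc_eq less_Suc_eq)
  then show ?thesis
    by (intro exI[of _ "Y(Suc N := S')"]) simp
qed

lemma height_ge_two:
  assumes n: "n \<ge> 3" and G: "homeo_subgroup (star_graph n) G"
  shows "enat 2 \<le> height (star_graph n) G"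
proof -
  let ?S = "star_graph n"
  have n0: "n > 0"
    using n by simp
  have fixes_centre: "g 0 = 0" and maps_tips: "g ` tips n \<subseteq> tips n" and maps_S: "g ` ?S \<subseteq> ?S"
    if "g \<in> G" for g
  proof -
    have "g \<in> Homeo ?S"
      using G that by (auto simp: homeo_subgroup_def)
    then obtain g' where h: "homeomorphism ?S ?S g g'"
      by (auto simp: Homeo_def)
    show "g 0 = 0"
      by (rule star_graph_homeomorphism_fixes_centre[OF n h])
    show "g ` tips n \<subseteq> tips n"
      using star_graph_homeomorphism_maps_tips[OF n h] by blast
    show "g ` ?S \<subseteq> ?S"
      using homeomorphism_image1[OF h] by simp
  qed
  have tips_S: "insert 0 (tips n) \<subseteq> ?S"
    using tips_subset_star_graph[OF n0] n0 by simp
  have "1 \<in> tips n"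
    using n0 by (auto simp: tips_def image_iff intro!: bexI[of _ 0])
  then have sub1: "{0} \<subset> insert 0 (tips n)"
    by auto
  have "complex_of_real (1/2) \<in> ?S - insert 0 (tips n)"
    using star_graphI[OF n0, of "1/2" 0] by (auto simp: tips_def dest: arg_cong[of _ _ cmod])
  then have sub2: "insert 0 (tips n) \<subset> ?S"
    using tips_S by blast
  have closed_invariant: "Y \<subseteq> ?S" "closedin (top_of_set ?S) Y" "invariant_set G Y"
    if "Y \<in> {{0}, insert 0 (tips n), ?S}" for Y
  proof -
    have "finite (insert 0 (tips n))"
      by (simp add: tips_def)
    then show "Y \<subseteq> ?S" "closedin (top_of_set ?S) Y"
      using that tips_S n0 by (auto intro: closed_subset finite_imp_closed)
    show "invariant_set G Y"
      using that fixes_centre maps_tips maps_S zero_in_star_graph[OF n0]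
      by (auto simp: invariant_set_def image_subset_iff)
  qed
  have "\<exists>Y. invariant_chain ?S G 0 Y \<and> Y 0 = {0}"
    using closed_invariant[of "{0}"] by (intro invariant_chain_0) auto
  then have "\<exists>Y. invariant_chain ?S G 1 Y \<and> Y 1 = insert 0 (tips n)"
    using sub1 closed_invariant[of "insert 0 (tips n)"] invariant_chain_Suc[of ?S G 0] by simp
  then have "\<exists>Y. invariant_chain ?S G 2 Y \<and> Y 2 = ?S"
    using sub2 closed_invariant[of ?S] invariant_chain_Suc[of ?S G 1] by (simp add: numeral_2_eq_2)
  then show ?thesis
    using enat_le_height by blast
qed

lemma homeo_subgroup_identity: "homeo_subgroup A {\<lambda>x. x}"
proof -
  have "(\<lambda>x. x) \<in> Homeo A"
    by (auto simp: Homeo_def intro!: exI[of _ "\<lambda>x. x"] homeomorphism_ident)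
  moreover have "homeo_inv A (\<lambda>x. x) = (\<lambda>x. x)"
    by (auto simp: homeo_inv_def fun_eq_iff inv_into_f_f[OF inj_on_id2])
  ultimately show ?thesis
    by (auto simp: homeo_subgroup_def comp_def)
qed

lemma height_identity:
  fixes A :: "'a::t1_space set"
  assumes "infinite A"
  shows "height A {\<lambda>x. x} = \<infinity>"
proof (rule height_eq_infinity)
  fix N
  obtain q :: "nat \<Rightarrow> 'a" where q: "inj q" "range q \<subseteq> A"
    using infinite_countable_subset[OF assms] by blast
  define Y where "Y i = (if i < N then q ` {..i} else A)" for i
  have "Y i \<subset> Y (Suc i)" if "i < N" for i
  proof (cases "Suc i < N")
    case True
    have "q (Suc i) \<notin> q ` {..i}"
      using q(1) by (auto dest: injD)
    with True that show ?thesis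
      by (auto simp: Y_def)
  next
    case False
    have "finite (q ` {..i})"
      by simp
    with assms q(2) False that show ?thesis
      by (auto simp: Y_def)
  qed
  moreover have "closedin (top_of_set A) (Y i)" "Y i \<noteq> {}" "Y i \<subseteq> A" for i
    using q(2) assms by (auto simp: Y_def intro: closed_subset finite_imp_closed)
  ultimately have "invariant_chain A {\<lambda>x. x} N Y"
    by (simp add: invariant_chain_def invariant_set_def)
  moreover have "Y N = A"
    by (simp add: Y_def)
  ultimately show "\<exists>Y. invariant_chain A {\<lambda>x. x} N Y \<and> Y N = A"
    by blast
qed

lemma invariant_set_orbit_subset:
  assumes "invariant_set G Y" "B \<inter> Y \<noteq> {}"
    and "\<And>x y. x \<in> B \<Longrightarrow> y \<in> B \<Longrightarrow> \<exists>g\<in>G. g x = y"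
  shows "B \<subseteq> Y"
proof
  fix y assume "y \<in> B"
  obtain x where "x \<in> B" "x \<in> Y"
    using assms(2) by blast
  with assms(1,3) \<open>y \<in> B\<close> show "y \<in> Y"
    unfolding invariant_set_def by metis
qed

text \<open>If each block of a finite cover lies in a single orbit, every invariant set is a union
  of blocks, so a strictly increasing chain of invariant sets picks up a new block at each step.\<close>
lemma height_le_card_orbit_blocks:
  assumes P: "finite P" "A \<subseteq> \<Union>P"
    and orbit: "\<And>B x y. B \<in> P \<Longrightarrow> x \<in> B \<Longrightarrow> y \<in> B \<Longrightarrow> \<exists>g\<in>G. g x = y"
  shows "height A G \<le> enat (card P - 1)"
proof (rule height_le_enat)
  fix N Y assume Y: "invariant_chain A G N Y"
  define S where "S i = {B\<in>P. B \<inter> Y i \<noteq> {}}" for i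
  have S_subset: "S i \<subseteq> P" for i
    by (auto simp: S_def)
  have saturated: "B \<subseteq> Y i" if "i \<le> N" "B \<in> P" "B \<inter> Y i \<noteq> {}" for i B
    using Y that orbit[of B] by (intro invariant_set_orbit_subset) (auto simp: invariant_chain_def)
  have "Suc i \<le> card (S i)" if "i \<le> N" for i
    using that
  proof (induction i)
    case 0
    have "Y 0 \<noteq> {}"
      using Y by (simp add: invariant_chain_def invariant_set_def)
    then obtain x where "x \<in> Y 0"
      by blast
    moreover have "Y 0 \<subseteq> \<Union>P"
      using Y P(2) by (auto simp: invariant_chain_def)
    ultimately have "S 0 \<noteq> {}"
      by (auto simp: S_def)
    then show ?case
      using finite_subset[OF S_subset P(1)] by (simp add: Suc_leI card_gt_0_iff)
  next
    case (Suc i)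
    have psub: "Y i \<subset> Y (Suc i)"
      using Y Suc.prems by (simp add: invariant_chain_def)
    obtain x where x: "x \<in> Y (Suc i)" "x \<notin> Y i"
      using psub by blast
    moreover have "Y (Suc i) \<subseteq> A"
      using Y Suc.prems by (simp add: invariant_chain_def)
    ultimately obtain B where B: "B \<in> P" "x \<in> B"
      using P(2) by blast
    have "B \<in> S (Suc i) - S i"
      using B x saturated[of i B] Suc.prems by (auto simp: S_def)
    moreover have "S i \<subseteq> S (Suc i)"
      using psub by (auto simp: S_def)
    ultimately have "card (S i) < card (S (Suc i))"
      using finite_subset[OF S_subset P(1)] by (metis Diff_iff psubsetI psubset_card_mono)
    then show ?case
      using Suc by simp
  qed
  then have "Suc N \<le> card (S N)"
    by simp
  moreover have "card (S N) \<le> card P"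
    using card_mono[OF P(1) S_subset] .
  ultimately show "N \<le> card P - 1"
    by simp
qed

section \<open>Radial groups\<close>

definition interval_group :: "(real \<Rightarrow> real) set \<Rightarrow> bool" where
  "interval_group \<Phi> \<longleftrightarrow> (\<lambda>x. x) \<in> \<Phi> \<and> (\<forall>\<phi>\<in>\<Phi>. \<forall>\<psi>\<in>\<Phi>. \<phi> \<circ> \<psi> \<in> \<Phi>)
     \<and> (\<forall>\<phi>\<in>\<Phi>. continuous_on {0..1} \<phi> \<and> strict_mono_on {0..1} \<phi> \<and> \<phi> ` {0..1} = {0..1}
          \<and> inv_into {0..1} \<phi> \<in> \<Phi>)"

lemma strict_mono_onto_unit_interval_fixes_0:
  fixes \<phi> :: "real \<Rightarrow> real"
  assumes "strict_mono_on {0..1} \<phi>" "\<phi> ` {0..1} = {0..1}"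
  shows "\<phi> 0 = 0"
proof -
  obtain x where x: "x \<in> {0..1}" "\<phi> x = 0"
    using assms(2) by (metis atLeastAtMost_iff image_iff order_refl zero_le_one)
  have "\<phi> 0 \<in> {0..1}"
    using assms(2) by auto
  moreover have "\<phi> 0 < \<phi> x" if "x \<noteq> 0"
    using strict_mono_onD[OF assms(1), of 0 x] x that by simp
  ultimately show ?thesis
    using x by (cases "x = 0") auto
qed

context
  fixes \<Phi> :: "(real \<Rightarrow> real) set"
  assumes \<Phi>: "interval_group \<Phi>"
begin

lemma interval_group_id: "(\<lambda>x. x) \<in> \<Phi>"
  using \<Phi> by (simp add: interval_group_def)

lemma interval_group_continuous: "\<phi> \<in> \<Phi> \<Longrightarrow> continuous_on {0..1} \<phi>"
  using \<Phi> by (simp add: interval_group_def)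

lemma interval_group_image: "\<phi> \<in> \<Phi> \<Longrightarrow> \<phi> ` {0..1} = {0..1}"
  using \<Phi> by (simp add: interval_group_def)

lemma interval_group_maps_into: "\<phi> \<in> \<Phi> \<Longrightarrow> x \<in> {0..1} \<Longrightarrow> \<phi> x \<in> {0..1}"
  using interval_group_image by blast

lemma interval_group_fixes_0: "\<phi> \<in> \<Phi> \<Longrightarrow> \<phi> 0 = 0"
  using \<Phi> strict_mono_onto_unit_interval_fixes_0 by (simp add: interval_group_def)

lemma interval_group_comp: "\<phi> \<in> \<Phi> \<Longrightarrow> \<psi> \<in> \<Phi> \<Longrightarrow> \<phi> \<circ> \<psi> \<in> \<Phi>"
  using \<Phi> by (simp add: interval_group_def)

lemma interval_group_inverse:
  assumes "\<phi> \<in> \<Phi>"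
  shows "inv_into {0..1} \<phi> \<in> \<Phi>"
    and "x \<in> {0..1} \<Longrightarrow> inv_into {0..1} \<phi> (\<phi> x) = x"
    and "x \<in> {0..1} \<Longrightarrow> \<phi> (inv_into {0..1} \<phi> x) = x"
proof -
  have "strict_mono_on {0..1} \<phi>"
    using \<Phi> assms by (simp add: interval_group_def)
  then have "inj_on \<phi> {0..1}"
    by (rule strict_mono_on_imp_inj_on)
  then show "x \<in> {0..1} \<Longrightarrow> inv_into {0..1} \<phi> (\<phi> x) = x"
    by (rule inv_into_f_f)
  show "x \<in> {0..1} \<Longrightarrow> \<phi> (inv_into {0..1} \<phi> x) = x"
    using interval_group_image[OF assms] by (metis f_inv_into_f)
  show "inv_into {0..1} \<phi> \<in> \<Phi>"
    using \<Phi> assms by (simp add: interval_group_def)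
qed

end

text \<open>At the centre the scaling factor is junk (division by zero), which is harmless since
  it multiplies 0.\<close>
definition radial_map :: "nat \<Rightarrow> nat \<Rightarrow> (real \<Rightarrow> real) \<Rightarrow> complex \<Rightarrow> complex" where
  "radial_map n j \<phi> z =
     (if z \<in> star_graph n then zeta n ^ j * complex_of_real (\<phi> (cmod z) / cmod z) * z else z)"

definition radial_group :: "nat \<Rightarrow> (real \<Rightarrow> real) set \<Rightarrow> (complex \<Rightarrow> complex) set" where
  "radial_group n \<Phi> = {radial_map n j \<phi> | j \<phi>. \<phi> \<in> \<Phi>}"

lemma radial_map_polar:
  assumes "n > 0" "\<phi> 0 = 0" "0 \<le> t" "t \<le> 1"
  shows "radial_map n j \<phi> (complex_of_real t * zeta n ^ k) = complex_of_real (\<phi> t) * zeta n ^ (j + k)"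
proof (cases "t = 0")
  case False
  have "\<phi> t / t * t = \<phi> t"
    using False by simp
  then have scale: "complex_of_real (\<phi> t / t) * complex_of_real t = complex_of_real (\<phi> t)"
    by (metis of_real_mult)
  have "radial_map n j \<phi> (complex_of_real t * zeta n ^ k)
      = zeta n ^ j * complex_of_real (\<phi> t / t) * (complex_of_real t * zeta n ^ k)"
    using assms star_graphI[OF assms(1) assms(3,4), of k] by (simp add: radial_map_def)
  also have "\<dots> = (complex_of_real (\<phi> t / t) * complex_of_real t) * (zeta n ^ j * zeta n ^ k)"
    by (simp only: mult_ac)
  also have "\<dots> = complex_of_real (\<phi> t) * zeta n ^ (j + k)"
    by (simp only: scale power_add)
  finally show ?thesis .
qed (use assms in \<open>simp add: radial_map_def\<close>)

lemma radial_map_outside: "z \<notin> star_graph n \<Longrightarrow> radial_map n j \<phi> z = z"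
  by (simp add: radial_map_def)

context
  fixes n :: nat and \<Phi> :: "(real \<Rightarrow> real) set"
  assumes n: "n > 0" and \<Phi>: "interval_group \<Phi>"
begin

lemma radial_map_polar_interval_group:
  assumes "\<phi> \<in> \<Phi>" "0 \<le> t" "t \<le> 1"
  shows "radial_map n j \<phi> (complex_of_real t * zeta n ^ k) = complex_of_real (\<phi> t) * zeta n ^ (j + k)"
  by (rule radial_map_polar) (use n interval_group_fixes_0[OF \<Phi> assms(1)] assms in auto)

lemma radial_map_in_star_graph:
  assumes "\<phi> \<in> \<Phi>" "z \<in> star_graph n"
  shows "radial_map n j \<phi> z \<in> star_graph n"
proof -
  obtain t k where "0 \<le> t" "t \<le> 1" "z = complex_of_real t * zeta n ^ k"
    using assms(2) by (rule star_graphE)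
  moreover have "\<phi> t \<in> {0..1}"
    using interval_group_maps_into[OF \<Phi> assms(1)] \<open>0 \<le> t\<close> \<open>t \<le> 1\<close> by simp
  ultimately show ?thesis
    using radial_map_polar_interval_group[OF assms(1)] n by auto
qed

lemma radial_map_comp:
  assumes "\<phi> \<in> \<Phi>" "\<psi> \<in> \<Phi>"
  shows "radial_map n j \<phi> \<circ> radial_map n i \<psi> = radial_map n (j + i) (\<phi> \<circ> \<psi>)"
proof
  fix z
  show "(radial_map n j \<phi> \<circ> radial_map n i \<psi>) z = radial_map n (j + i) (\<phi> \<circ> \<psi>) z"
  proof (cases "z \<in> star_graph n")
    case True
    then obtain t k where t: "0 \<le> t" "t \<le> 1" "z = complex_of_real t * zeta n ^ k"
      by (rule star_graphE)
    have "\<psi> t \<in> {0..1}"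
      using interval_group_maps_into[OF \<Phi> assms(2)] t by simp
    then show ?thesis
      using t radial_map_polar_interval_group[OF assms(2)] radial_map_polar_interval_group[OF assms(1)]
        radial_map_polar_interval_group[OF interval_group_comp[OF \<Phi> assms]]
      by (simp add: add.assoc)
  qed (simp add: radial_map_outside)
qed

lemma radial_map_eq_id:
  assumes "\<phi> \<in> \<Phi>" "j mod n = 0" "\<And>x. x \<in> {0..1} \<Longrightarrow> \<phi> x = x" "z \<in> star_graph n"
  shows "radial_map n j \<phi> z = z"
proof -
  obtain t k where t: "0 \<le> t" "t \<le> 1" "z = complex_of_real t * zeta n ^ k"
    using assms(4) by (rule star_graphE)
  have "zeta n ^ (j + k) = zeta n ^ k"
    using assms(2) mod_add_left_eq[of j n k] by (simp add: zeta_power_eq_iff[OF n])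
  then show ?thesis
    using t radial_map_polar_interval_group[OF assms(1)] assms(3) by simp
qed

lemma continuous_on_radial_map:
  assumes "\<phi> \<in> \<Phi>"
  shows "continuous_on (star_graph n) (radial_map n j \<phi>)"
  unfolding star_graph_eq_arms
proof (rule continuous_on_closed_Union)
  fix k
  have "continuous_on (arm n k) (\<lambda>z. \<phi> (cmod z))"
  proof (rule continuous_on_compose2[of "{0..1}" \<phi>])
    show "continuous_on {0..1} \<phi>"
      by (rule interval_group_continuous[OF \<Phi> assms])
    show "cmod ` arm n k \<subseteq> {0..1}"
      by (auto simp: arm_eq)
  qed (intro continuous_intros)
  then have "continuous_on (arm n k) (\<lambda>z. complex_of_real (\<phi> (cmod z)) * zeta n ^ (j + k))"
    by (intro continuous_intros)
  moreover have "complex_of_real (\<phi> (cmod z)) * zeta n ^ (j + k) = radial_map n j \<phi> z"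
    if "z \<in> arm n k" for z
    using that radial_map_polar_interval_group[OF assms] by (auto simp: arm_eq)
  ultimately show "continuous_on (arm n k) (radial_map n j \<phi>)"
    by (rule continuous_on_eq)
qed auto

lemma radial_map_homeomorphism:
  assumes "\<phi> \<in> \<Phi>"
  shows "homeomorphism (star_graph n) (star_graph n)
           (radial_map n j \<phi>) (radial_map n ((n - 1) * j) (inv_into {0..1} \<phi>))"
proof -
  let ?\<psi> = "inv_into {0..1} \<phi>"
  let ?i = "(n - 1) * j"
  note \<psi> = interval_group_inverse[OF \<Phi> assms]
  obtain m where "n = Suc m"
    using n by (cases n) auto
  then have "?i + j = n * j"
    by simp
  then have full_turn: "(?i + j) mod n = 0" "(j + ?i) mod n = 0"
    by (simp_all only: add.commute[of j]) simp_all
  have "radial_map n ?i ?\<psi> (radial_map n j \<phi> z) = z" if "z \<in> star_graph n" for z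
  proof -
    have "radial_map n ?i ?\<psi> (radial_map n j \<phi> z) = radial_map n (?i + j) (?\<psi> \<circ> \<phi>) z"
      using fun_cong[OF radial_map_comp[OF \<psi>(1) assms]] by simp
    also have "\<dots> = z"
      using \<psi>(2) by (intro radial_map_eq_id interval_group_comp[OF \<Phi>] \<psi>(1) assms full_turn that) auto
    finally show ?thesis .
  qed
  moreover have "radial_map n j \<phi> (radial_map n ?i ?\<psi> z) = z" if "z \<in> star_graph n" for z
  proof -
    have "radial_map n j \<phi> (radial_map n ?i ?\<psi> z) = radial_map n (j + ?i) (\<phi> \<circ> ?\<psi>) z"
      using fun_cong[OF radial_map_comp[OF assms \<psi>(1)]] by simp
    also have "\<dots> = z"
      using \<psi>(3) by (intro radial_map_eq_id interval_group_comp[OF \<Phi>] \<psi>(1) assms full_turn that) auto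
    finally show ?thesis .
  qed
  moreover have "radial_map n j \<phi> ` star_graph n \<subseteq> star_graph n"
    "radial_map n ?i ?\<psi> ` star_graph n \<subseteq> star_graph n"
    using radial_map_in_star_graph assms \<psi>(1) by blast+
  ultimately show ?thesis
    by (intro homeomorphismI continuous_on_radial_map assms \<psi>(1))
qed

lemma homeo_subgroup_radial_group: "homeo_subgroup (star_graph n) (radial_group n \<Phi>)"
  unfolding homeo_subgroup_def
proof (intro conjI ballI)
  show "radial_group n \<Phi> \<subseteq> Homeo (star_graph n)"
    using radial_map_homeomorphism by (auto simp: radial_group_def Homeo_def radial_map_outside)
  have "radial_map n 0 (\<lambda>x. x) x = x" for x
    using radial_map_eq_id[OF interval_group_id[OF \<Phi>], of 0 x]
    by (cases "x \<in> star_graph n") (simp_all add: radial_map_outside)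
  then have "radial_map n 0 (\<lambda>x. x) = (\<lambda>x. x)"
    by (rule ext)
  moreover have "radial_map n 0 (\<lambda>x. x) \<in> radial_group n \<Phi>"
    using interval_group_id[OF \<Phi>] by (auto simp: radial_group_def)
  ultimately show "(\<lambda>x. x) \<in> radial_group n \<Phi>"
    by simp
next
  fix f g assume "f \<in> radial_group n \<Phi>" "g \<in> radial_group n \<Phi>"
  then obtain j i \<phi> \<psi> where fg: "f = radial_map n j \<phi>" "g = radial_map n i \<psi>" "\<phi> \<in> \<Phi>" "\<psi> \<in> \<Phi>"
    by (auto simp: radial_group_def)
  then have "f \<circ> g = radial_map n (j + i) (\<phi> \<circ> \<psi>)"
    using radial_map_comp by simp
  moreover have "\<phi> \<circ> \<psi> \<in> \<Phi>"
    using interval_group_comp[OF \<Phi> fg(3,4)] .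
  ultimately show "f \<circ> g \<in> radial_group n \<Phi>"
    unfolding radial_group_def by blast
next
  fix f assume "f \<in> radial_group n \<Phi>"
  then obtain j \<phi> where f: "f = radial_map n j \<phi>" "\<phi> \<in> \<Phi>"
    by (auto simp: radial_group_def)
  let ?g = "radial_map n ((n - 1) * j) (inv_into {0..1} \<phi>)"
  have h: "homeomorphism (star_graph n) (star_graph n) f ?g"
    using radial_map_homeomorphism[OF f(2)] f(1) by simp
  have inj: "inj_on f (star_graph n)"
    using h by (metis homeomorphism_apply1 inj_on_inverseI)
  have "homeo_inv (star_graph n) f x = ?g x" for x
  proof (cases "x \<in> star_graph n")
    case True
    have "?g x \<in> star_graph n"
      using homeomorphism_image2[OF h] True by blast
    then have "inv_into (star_graph n) f x = ?g x"
      using inv_into_f_eq[OF inj] homeomorphism_apply2[OF h True] by blast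
    then show ?thesis
      using True by (simp add: homeo_inv_def)
  qed (simp add: homeo_inv_def radial_map_outside)
  moreover have "?g \<in> radial_group n \<Phi>"
    using interval_group_inverse(1)[OF \<Phi> f(2)] by (auto simp: radial_group_def)
  ultimately show "homeo_inv (star_graph n) f \<in> radial_group n \<Phi>"
    by (metis ext)
qed

end

definition radial_lift :: "nat \<Rightarrow> real set \<Rightarrow> complex set" where
  "radial_lift n R = {z \<in> star_graph n. cmod z \<in> R}"

lemma norm_image_radial_lift:
  assumes "n > 0" "R \<subseteq> {0..1}"
  shows "cmod ` radial_lift n R = R"
proof
  show "R \<subseteq> cmod ` radial_lift n R"
  proof
    fix t assume "t \<in> R"
    then have "complex_of_real t * zeta n ^ 0 \<in> radial_lift n R"
      using assms star_graphI[OF assms(1), of t 0] by (auto simp: radial_lift_def)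
    then show "t \<in> cmod ` radial_lift n R"
      using \<open>t \<in> R\<close> assms(2) by (metis atLeastAtMost_iff image_eqI norm_of_real_mult_zeta_power subsetD)
  qed
qed (auto simp: radial_lift_def)

lemma radial_lift_unit_interval: "radial_lift n {0..1} = star_graph n"
  by (auto simp: radial_lift_def elim: star_graphE)

lemma closedin_radial_lift:
  assumes "closedin (top_of_set {0..1}) R"
  shows "closedin (top_of_set (star_graph n)) (radial_lift n R)"
proof -
  have "closed (cmod -` R)"
    using closedin_closed_trans[OF assms] by (intro continuous_closed_vimage continuous_intros) auto
  moreover have "radial_lift n R = star_graph n \<inter> cmod -` R"
    by (auto simp: radial_lift_def)
  ultimately show ?thesis
    by (simp add: closedin_closed_Int)
qed

lemma closedin_norm_image:
  assumes "closedin (top_of_set (star_graph n)) Y" "cmod ` Y \<subseteq> {0..1}"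
  shows "closedin (top_of_set {0..1}) (cmod ` Y)"
  using closedin_compact[OF compact_star_graph assms(1)] assms(2)
  by (intro closed_subset compact_imp_closed compact_continuous_image continuous_intros)

context
  fixes n :: nat and \<Phi> :: "(real \<Rightarrow> real) set"
  assumes n: "n > 0" and \<Phi>: "interval_group \<Phi>"
begin

text \<open>Rotations act transitively on each circle, so an invariant set is determined by
  its set of radii.\<close>
lemma invariant_set_eq_radial_lift:
  assumes Y: "invariant_set (radial_group n \<Phi>) Y" "Y \<subseteq> star_graph n"
  shows "Y = radial_lift n (cmod ` Y)"
proof
  show "radial_lift n (cmod ` Y) \<subseteq> Y"
  proof
    fix z assume "z \<in> radial_lift n (cmod ` Y)"
    then obtain y where z: "z \<in> star_graph n" and y: "y \<in> Y" "cmod z = cmod y"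
      by (auto simp: radial_lift_def)
    obtain t k where t: "0 \<le> t" "t \<le> 1" "y = complex_of_real t * zeta n ^ k"
      using y(1) Y(2) by (blast elim: star_graphE)
    obtain s k' where s: "0 \<le> s" "s \<le> 1" "z = complex_of_real s * zeta n ^ k'"
      using z by (rule star_graphE)
    have "s = t"
      using y(2) s t by simp
    let ?j = "k' + (n - 1) * k"
    have "?j + k = k' + n * k"
      using n by (cases n) simp_all
    then have "(?j + k) mod n = (k' + n * k) mod n"
      by (rule arg_cong)
    also have "\<dots> = k' mod n"
      by simp
    finally have rotate: "zeta n ^ (?j + k) = zeta n ^ k'"
      using n by (simp only: zeta_power_eq_iff)
    have "radial_map n ?j (\<lambda>x. x) \<in> radial_group n \<Phi>"
      using interval_group_id[OF \<Phi>] by (auto simp: radial_group_def)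
    then have "radial_map n ?j (\<lambda>x. x) y \<in> Y"
      using Y(1) y(1) unfolding invariant_set_def by blast
    then show "z \<in> Y"
      using radial_map_polar_interval_group[OF n \<Phi> interval_group_id[OF \<Phi>] t(1,2)] t(3) s(3) \<open>s = t\<close> rotate
      by simp
  qed
qed (use Y in \<open>auto simp: radial_lift_def\<close>)

lemma invariant_set_norm_image:
  assumes Y: "invariant_set (radial_group n \<Phi>) Y" "Y \<subseteq> star_graph n"
  shows "invariant_set \<Phi> (cmod ` Y)" "cmod ` Y \<subseteq> {0..1}"
proof -
  show "cmod ` Y \<subseteq> {0..1}"
    using Y(2) by (auto elim!: star_graphE)
  have "\<phi> r \<in> cmod ` Y" if \<phi>: "\<phi> \<in> \<Phi>" and r: "r \<in> cmod ` Y" for \<phi> r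
  proof -
    obtain y where y: "y \<in> Y" "r = cmod y"
      using r by blast
    then obtain t k where t: "0 \<le> t" "t \<le> 1" "y = complex_of_real t * zeta n ^ k"
      using Y(2) by (blast elim: star_graphE)
    have "radial_map n 0 \<phi> \<in> radial_group n \<Phi>"
      using \<phi> by (auto simp: radial_group_def)
    then have "radial_map n 0 \<phi> y \<in> Y"
      using Y(1) y(1) unfolding invariant_set_def by blast
    then have "complex_of_real (\<phi> t) * zeta n ^ k \<in> Y"
      using t radial_map_polar_interval_group[OF n \<Phi> \<phi>, of t 0 k] by simp
    moreover have "\<phi> t \<ge> 0"
      using interval_group_maps_into[OF \<Phi> \<phi>] t by auto
    ultimately show ?thesis
      using y(2) t by (metis image_eqI norm_of_real_mult_zeta_power)
  qed
  then show "invariant_set \<Phi> (cmod ` Y)"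
    using Y(1) by (auto simp: invariant_set_def)
qed

lemma invariant_set_radial_lift:
  assumes R: "invariant_set \<Phi> R" "R \<subseteq> {0..1}"
  shows "invariant_set (radial_group n \<Phi>) (radial_lift n R)"
  unfolding invariant_set_def
proof (intro conjI ballI)
  show "radial_lift n R \<noteq> {}"
    using norm_image_radial_lift[OF n R(2)] R(1) by (auto simp: invariant_set_def)
next
  fix f z assume f: "f \<in> radial_group n \<Phi>" and z: "z \<in> radial_lift n R"
  then obtain j \<phi> where fj: "f = radial_map n j \<phi>" "\<phi> \<in> \<Phi>"
    by (auto simp: radial_group_def)
  have "z \<in> star_graph n"
    using z by (simp add: radial_lift_def)
  then obtain t k where t: "0 \<le> t" "t \<le> 1" "z = complex_of_real t * zeta n ^ k"
    by (rule star_graphE)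
  have "\<phi> t \<in> R"
    using R(1) fj(2) z t by (auto simp: invariant_set_def radial_lift_def)
  moreover have "\<phi> t \<in> {0..1}"
    using interval_group_maps_into[OF \<Phi> fj(2)] t by simp
  ultimately show "f z \<in> radial_lift n R"
    using radial_map_polar_interval_group[OF n \<Phi> fj(2) t(1,2)] t(3) fj(1) n by (auto simp: radial_lift_def)
qed

lemma invariant_chain_norm_image:
  assumes Y: "invariant_chain (star_graph n) (radial_group n \<Phi>) N Y"
  shows "invariant_chain {0..1} \<Phi> N (\<lambda>i. cmod ` Y i)"
proof -
  have Yi: "Y i \<subseteq> star_graph n" "closedin (top_of_set (star_graph n)) (Y i)"
    "invariant_set (radial_group n \<Phi>) (Y i)" if "i \<le> N" for i
    using Y that by (simp_all add: invariant_chain_def)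
  have "cmod ` Y i \<subset> cmod ` Y (Suc i)" if "i < N" for i
  proof -
    have sub: "Y i \<subset> Y (Suc i)"
      using Y that by (simp add: invariant_chain_def)
    have "cmod ` Y i \<noteq> cmod ` Y (Suc i)"
    proof
      assume eq: "cmod ` Y i = cmod ` Y (Suc i)"
      have "Y i = radial_lift n (cmod ` Y i)"
        using Yi that invariant_set_eq_radial_lift by simp
      also have "\<dots> = Y (Suc i)"
        using Yi that invariant_set_eq_radial_lift by (simp only: eq)
      finally show False
        using sub by simp
    qed
    with sub show ?thesis
      by blast
  qed
  moreover have "cmod ` Y i \<subseteq> {0..1}" "invariant_set \<Phi> (cmod ` Y i)"
    "closedin (top_of_set {0..1}) (cmod ` Y i)" if "i \<le> N" for i
    using invariant_set_norm_image[OF Yi(3,1)] closedin_norm_image[OF Yi(2)] that by simp_all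
  ultimately show ?thesis
    unfolding invariant_chain_def by blast
qed

lemma invariant_chain_radial_lift:
  assumes R: "invariant_chain {0..1} \<Phi> N R"
  shows "invariant_chain (star_graph n) (radial_group n \<Phi>) N (\<lambda>i. radial_lift n (R i))"
proof -
  have Ri: "R i \<subseteq> {0..1}" "closedin (top_of_set {0..1}) (R i)" "invariant_set \<Phi> (R i)"
    if "i \<le> N" for i
    using R that by (simp_all add: invariant_chain_def)
  have "radial_lift n (R i) \<subset> radial_lift n (R (Suc i))" if "i < N" for i
  proof -
    have sub: "R i \<subset> R (Suc i)"
      using R that by (simp add: invariant_chain_def)
    then have "radial_lift n (R i) \<subseteq> radial_lift n (R (Suc i))"
      by (auto simp: radial_lift_def)
    moreover have "radial_lift n (R i) \<noteq> radial_lift n (R (Suc i))"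
    proof
      assume eq: "radial_lift n (R i) = radial_lift n (R (Suc i))"
      have "R i = cmod ` radial_lift n (R i)"
        using norm_image_radial_lift[OF n Ri(1)] that by simp
      also have "\<dots> = R (Suc i)"
        using norm_image_radial_lift[OF n Ri(1), of "Suc i"] that by (simp only: eq)
      finally show False
        using sub by simp
    qed
    ultimately show ?thesis
      by blast
  qed
  moreover have "radial_lift n (R i) \<subseteq> star_graph n"
    "closedin (top_of_set (star_graph n)) (radial_lift n (R i))"
    "invariant_set (radial_group n \<Phi>) (radial_lift n (R i))" if "i \<le> N" for i
    using closedin_radial_lift[OF Ri(2)] invariant_set_radial_lift[OF Ri(3,1)] that
    by (auto simp: radial_lift_def)
  ultimately show ?thesis
    unfolding invariant_chain_def by blast
qed

lemma height_radial_group: "height (star_graph n) (radial_group n \<Phi>) = height {0..1} \<Phi>"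
proof -
  have "(\<exists>Y. invariant_chain (star_graph n) (radial_group n \<Phi>) N Y \<and> Y N = star_graph n)
    \<longleftrightarrow> (\<exists>R. invariant_chain {0..1} \<Phi> N R \<and> R N = {0..1})" for N
  proof
    assume "\<exists>Y. invariant_chain (star_graph n) (radial_group n \<Phi>) N Y \<and> Y N = star_graph n"
    then obtain Y where "invariant_chain (star_graph n) (radial_group n \<Phi>) N Y" "Y N = star_graph n"
      by blast
    moreover have "cmod ` star_graph n = {0..1}"
      using norm_image_radial_lift[OF n, of "{0..1}"] by (simp add: radial_lift_unit_interval)
    ultimately have "invariant_chain {0..1} \<Phi> N (\<lambda>i. cmod ` Y i) \<and> cmod ` Y N = {0..1}"
      using invariant_chain_norm_image by simp
    then show "\<exists>R. invariant_chain {0..1} \<Phi> N R \<and> R N = {0..1}"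
      by blast
  next
    assume "\<exists>R. invariant_chain {0..1} \<Phi> N R \<and> R N = {0..1}"
    then obtain R where "invariant_chain {0..1} \<Phi> N R" "R N = {0..1}"
      by blast
    then have "invariant_chain (star_graph n) (radial_group n \<Phi>) N (\<lambda>i. radial_lift n (R i))
        \<and> radial_lift n (R N) = star_graph n"
      using invariant_chain_radial_lift radial_lift_unit_interval by simp
    then show "\<exists>Y. invariant_chain (star_graph n) (radial_group n \<Phi>) N Y \<and> Y N = star_graph n"
      by blast
  qed
  then show ?thesis
    by (simp add: height_eq_Sup_invariant_chain)
qed

end

section \<open>Homeomorphisms of the unit interval\<close>

definition interval_homeos :: "real set \<Rightarrow> real set \<Rightarrow> (real \<Rightarrow> real) set" where
  "interval_homeos C D = {\<phi>. continuous_on {0..1} \<phi> \<and> strict_mono_on {0..1} \<phi> \<and> \<phi> ` {0..1} = {0..1}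
     \<and> (\<forall>c\<in>C. \<phi> c = c) \<and> (\<forall>x\<in>{0..1}. \<phi> x \<in> D \<longleftrightarrow> x \<in> D)}"

lemma interval_homeos_id: "(\<lambda>x. x) \<in> interval_homeos C D"
  by (auto simp: interval_homeos_def strict_mono_on_def)

lemma interval_homeos_maps_into: "\<phi> \<in> interval_homeos C D \<Longrightarrow> x \<in> {0..1} \<Longrightarrow> \<phi> x \<in> {0..1}"
  by (auto simp: interval_homeos_def)

lemma interval_homeos_mono:
  assumes "\<phi> \<in> interval_homeos C D" "x \<in> {0..1}" "y \<in> {0..1}" "x \<le> y"
  shows "\<phi> x \<le> \<phi> y"
  using assms strict_mono_onD[of "{0..1}" \<phi> x y]
  by (cases "x = y") (auto simp: interval_homeos_def)

lemma interval_homeos_comp: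
  assumes "\<phi> \<in> interval_homeos C D" "\<psi> \<in> interval_homeos C D"
  shows "\<phi> \<circ> \<psi> \<in> interval_homeos C D"
proof -
  have "(\<phi> \<circ> \<psi>) ` {0..1} = \<phi> ` (\<psi> ` {0..1})"
    by (rule image_comp[symmetric])
  then have "(\<phi> \<circ> \<psi>) ` {0..1} = {0..1}"
    using assms by (simp add: interval_homeos_def)
  moreover have "continuous_on {0..1} (\<phi> \<circ> \<psi>)"
    using assms by (intro continuous_on_compose) (auto simp: interval_homeos_def)
  moreover have "strict_mono_on {0..1} (\<phi> \<circ> \<psi>)"
    using assms interval_homeos_maps_into[OF assms(2)]
    unfolding interval_homeos_def strict_mono_on_def by auto
  ultimately show ?thesis
    using assms interval_homeos_maps_into[OF assms(2)] by (auto simp: interval_homeos_def)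
qed

lemma interval_homeos_inv:
  assumes f: "\<phi> \<in> interval_homeos C D" and C: "C \<subseteq> {0..1}"
  shows "inv_into {0..1} \<phi> \<in> interval_homeos C D"
proof -
  let ?g = "inv_into {0..1} \<phi>"
  have inj: "inj_on \<phi> {0..1}"
    using f by (auto simp: interval_homeos_def intro: strict_mono_on_imp_inj_on)
  have im: "\<phi> ` {0..1} = {0..1}"
    using f by (simp add: interval_homeos_def)
  have gf: "?g (\<phi> x) = x" if "x \<in> {0..1}" for x
    using inv_into_f_f[OF inj that] .
  have fg: "\<phi> (?g y) = y" if "y \<in> {0..1}" for y
    using f_inv_into_f[of y \<phi> "{0..1}"] im that by simp
  have gr: "?g y \<in> {0..1}" if "y \<in> {0..1}" for y
    using inv_into_into[of y \<phi> "{0..1}"] im that by simp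
  have "continuous_on (\<phi> ` {0..1}) ?g"
    by (rule continuous_on_inv) (use f gf in \<open>auto simp: interval_homeos_def\<close>)
  then have "continuous_on {0..1} ?g"
    using im by simp
  moreover have "strict_mono_on {0..1} ?g"
  proof (rule strict_mono_onI)
    fix r s :: real assume rs: "r \<in> {0..1}" "s \<in> {0..1}" "r < s"
    show "?g r < ?g s"
    proof (rule ccontr)
      assume "\<not> ?g r < ?g s"
      then have "\<phi> (?g s) \<le> \<phi> (?g r)"
        using interval_homeos_mono[OF f gr gr] rs by simp
      then show False
        using fg rs by simp
    qed
  qed
  moreover have "?g ` {0..1} = {0..1}"
  proof
    show "{0..1} \<subseteq> ?g ` {0..1}"
      using gf interval_homeos_maps_into[OF f] by (metis image_eqI subsetI)
  qed (use gr in blast)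
  moreover have "?g c = c" if "c \<in> C" for c
    using f C that gf[of c] by (auto simp: interval_homeos_def)
  moreover have "?g x \<in> D \<longleftrightarrow> x \<in> D" if "x \<in> {0..1}" for x
  proof -
    have "\<phi> (?g x) \<in> D \<longleftrightarrow> ?g x \<in> D"
      using f gr[OF that] by (simp add: interval_homeos_def)
    then show ?thesis
      using fg[OF that] by simp
  qed
  ultimately show ?thesis
    by (simp add: interval_homeos_def)
qed

lemma interval_group_interval_homeos:
  assumes "C \<subseteq> {0..1}"
  shows "interval_group (interval_homeos C D)"
  unfolding interval_group_def
proof (intro conjI ballI)
  fix \<phi> assume "\<phi> \<in> interval_homeos C D"
  then show "continuous_on {0..1} \<phi>" "strict_mono_on {0..1} \<phi>" "\<phi> ` {0..1} = {0..1}"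
    by (simp_all add: interval_homeos_def)
  show "inv_into {0..1} \<phi> \<in> interval_homeos C D"
    using \<open>\<phi> \<in> _\<close> assms by (rule interval_homeos_inv)
qed (simp_all add: interval_homeos_id interval_homeos_comp)

lemma divide_less_divide_pos: "(b::real) > 0 \<Longrightarrow> d > 0 \<Longrightarrow> a * d < c * b \<Longrightarrow> a / b < c / d"
  by (simp add: field_simps)

lemma in_interval_homeos_0_1I:
  fixes f :: "real \<Rightarrow> real"
  assumes cont: "continuous_on {0..1} f" and mono: "strict_mono_on {0..1} f"
    and f01: "f 0 = 0" "f 1 = 1"
  shows "f \<in> interval_homeos {0, 1} {}"
proof -
  have "f x \<in> {0..1}" if "x \<in> {0..1}" for x
    using strict_mono_onD[OF mono, of 0 x] strict_mono_onD[OF mono, of x 1] that f01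
    by (cases "x = 0"; cases "x = 1") auto
  moreover have "y \<in> f ` {0..1}" if "y \<in> {0..1}" for y
    using IVT'[of f 0 y 1] cont f01 that by force
  ultimately have "f ` {0..1} = {0..1}"
    by blast
  with assms show ?thesis
    by (simp add: interval_homeos_def)
qed

definition odds_scaling :: "real \<Rightarrow> real \<Rightarrow> real" where
  "odds_scaling l u = l * u / (1 + (l - 1) * u)"

context
  fixes l :: real
  assumes l: "l > 0"
begin

lemma odds_scaling_denominator_pos:
  assumes "u \<in> {0..1}"
  shows "1 + (l - 1) * u > 0"
proof -
  have "l * u \<ge> 0" "1 - u \<ge> 0" "l * u = 0 \<Longrightarrow> 1 - u > 0"
    using l assms by auto
  moreover have "1 + (l - 1) * u = (1 - u) + l * u"
    by (simp add: algebra_simps)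
  ultimately show ?thesis
    by linarith
qed

lemma strict_mono_on_odds_scaling: "strict_mono_on {0..1} (odds_scaling l)"
proof (rule strict_mono_onI)
  fix u v :: real assume uv: "u \<in> {0..1}" "v \<in> {0..1}" "u < v"
  have "l * v * (1 + (l - 1) * u) - l * u * (1 + (l - 1) * v) = l * (v - u)"
    by (simp add: algebra_simps)
  moreover have "l * (v - u) > 0"
    using l uv by simp
  ultimately have "l * u * (1 + (l - 1) * v) < l * v * (1 + (l - 1) * u)"
    by linarith
  then show "odds_scaling l u < odds_scaling l v"
    unfolding odds_scaling_def using odds_scaling_denominator_pos uv by (intro divide_less_divide_pos) auto
qed

lemma odds_scaling_in_interval_homeos: "odds_scaling l \<in> interval_homeos {0, 1} {}"
proof (rule in_interval_homeos_0_1I)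
  show "continuous_on {0..1} (odds_scaling l)"
    unfolding odds_scaling_def using odds_scaling_denominator_pos
    by (intro continuous_intros) (metis less_irrefl)
qed (use l strict_mono_on_odds_scaling in \<open>simp_all add: odds_scaling_def\<close>)

lemma odds_scaling_in_open_unit_interval: "u \<in> {0<..<1} \<Longrightarrow> odds_scaling l u \<in> {0<..<1}"
  using strict_mono_onD[OF strict_mono_on_odds_scaling, of 0 u] strict_mono_onD[OF strict_mono_on_odds_scaling, of u 1] l
  by (simp add: odds_scaling_def)

lemma odds_scaling_odds:
  assumes u: "u \<in> {0..<1}"
  shows "odds_scaling l u / (1 - odds_scaling l u) = l * (u / (1 - u))"
proof -
  define d where "d = 1 + (l - 1) * u"
  have d: "d > 0"
    using odds_scaling_denominator_pos u by (simp add: d_def)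
  have "1 - odds_scaling l u = (d - l * u) / d"
    using d by (simp add: odds_scaling_def d_def diff_divide_distrib)
  also have "d - l * u = 1 - u"
    by (simp add: d_def algebra_simps)
  finally have "odds_scaling l u / (1 - odds_scaling l u) = (l * u / d) / ((1 - u) / d)"
    by (simp add: odds_scaling_def d_def)
  also have "\<dots> = l * (u / (1 - u))"
    using d by simp
  finally show ?thesis .
qed

end

definition logit :: "real \<Rightarrow> real" where
  "logit u = ln (u / (1 - u))"

definition logistic :: "real \<Rightarrow> real" where
  "logistic w = exp w / (1 + exp w)"

lemma logistic_in_unit_interval: "logistic w \<in> {0<..<1}"
proof -
  have "1 + exp w > 0"
    by (simp add: add_pos_pos)
  then show ?thesis
    by (simp add: logistic_def divide_less_eq)
qed

lemma logit_logistic [simp]: "logit (logistic w) = w"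
proof -
  have pos: "1 + exp w > 0"
    by (simp add: add_pos_pos)
  then have "1 - logistic w = 1 / (1 + exp w)"
    by (simp add: logistic_def field_simps)
  then have "logistic w / (1 - logistic w) = exp w"
    using pos by (simp add: logistic_def)
  then show ?thesis
    by (simp add: logit_def)
qed

lemma logit_strict_mono:
  assumes "u \<in> {0<..<1}" "v \<in> {0<..<1}" "u < v"
  shows "logit u < logit v"
proof -
  have "u * (1 - v) < v * (1 - u)"
    using assms(3) by (simp add: algebra_simps)
  then have "u / (1 - u) < v / (1 - v)"
    using assms(1,2) by (intro divide_less_divide_pos) auto
  moreover have "u / (1 - u) > 0" "v / (1 - v) > 0"
    using assms(1,2) by simp_all
  ultimately show ?thesis
    by (simp add: logit_def)
qed

lemma logit_less_iff:
  assumes "u \<in> {0<..<1}" "v \<in> {0<..<1}"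
  shows "logit u < logit v \<longleftrightarrow> u < v"
  using assms logit_strict_mono by (metis not_less_iff_gr_or_eq)

lemma logit_inj: "u \<in> {0<..<1} \<Longrightarrow> v \<in> {0<..<1} \<Longrightarrow> logit u = logit v \<Longrightarrow> u = v"
  using logit_strict_mono by (metis less_irrefl not_less_iff_gr_or_eq)

lemma logit_odds_scaling:
  assumes "l > 0" "u \<in> {0<..<1}"
  shows "logit (odds_scaling l u) = ln l + logit u"
proof -
  have "u / (1 - u) > 0"
    using assms(2) by simp
  then have "ln (l * (u / (1 - u))) = ln l + ln (u / (1 - u))"
    using assms(1) by (intro ln_mult_pos)
  then show ?thesis
    using odds_scaling_odds[OF assms(1), of u] assms(2) by (simp add: logit_def)
qed

lemma odds_scaling_logit_diff:
  assumes "u \<in> {0<..<1}" "v \<in> {0<..<1}"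
  shows "odds_scaling (exp (logit v - logit u)) u = v"
proof (rule logit_inj)
  show "odds_scaling (exp (logit v - logit u)) u \<in> {0<..<1}"
    using odds_scaling_in_open_unit_interval assms(1) by simp
  show "logit (odds_scaling (exp (logit v - logit u)) u) = logit v"
    using logit_odds_scaling[OF _ assms(1)] by simp
qed (use assms in simp)

definition rescale :: "real \<Rightarrow> real \<Rightarrow> (real \<Rightarrow> real) \<Rightarrow> real \<Rightarrow> real" where
  "rescale c d h z = (if c \<le> z \<and> z \<le> d then c + (d - c) * h ((z - c) / (d - c)) else z)"

locale rescaling =
  fixes c d :: real and h :: "real \<Rightarrow> real"
  assumes cd: "0 \<le> c" "c < d" "d \<le> 1" and h: "h \<in> interval_homeos {0, 1} {}"
begin

lemma rescale_below: "z \<le> c \<Longrightarrow> rescale c d h z = z"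
  using h cd by (auto simp: rescale_def interval_homeos_def)

lemma rescale_above: "d \<le> z \<Longrightarrow> rescale c d h z = z"
  using h cd by (auto simp: rescale_def interval_homeos_def)

lemma rescale_outside: "z \<notin> {c<..<d} \<Longrightarrow> rescale c d h z = z"
  using rescale_below rescale_above by force

lemma rescale_segment: "z \<in> {c..d} \<Longrightarrow> rescale c d h z = c + (d - c) * h ((z - c) / (d - c))"
  by (simp add: rescale_def)

lemma normalize_segment: "z \<in> {c..d} \<Longrightarrow> (z - c) / (d - c) \<in> {0..1}"
  using cd by (auto simp: field_simps)

lemma rescale_maps_segment:
  assumes z: "z \<in> {c..d}"
  shows "rescale c d h z \<in> {c..d}"
proof -
  have "h ((z - c) / (d - c)) \<in> {0..1}"
    using h normalize_segment[OF z] by (auto simp: interval_homeos_def)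
  then have "0 \<le> (d - c) * h ((z - c) / (d - c))" "(d - c) * h ((z - c) / (d - c)) \<le> d - c"
    using cd by (auto simp: mult_le_cancel_left1)
  then show ?thesis
    using rescale_segment[OF z] by simp
qed

lemma rescale_strict_segment:
  assumes z: "z1 \<in> {c..d}" "z2 \<in> {c..d}" "z1 < z2"
  shows "rescale c d h z1 < rescale c d h z2"
proof -
  have "(z1 - c) / (d - c) < (z2 - c) / (d - c)"
    using z cd by (simp add: divide_strict_right_mono)
  then have "h ((z1 - c) / (d - c)) < h ((z2 - c) / (d - c))"
    using h normalize_segment z by (auto simp: interval_homeos_def strict_mono_on_def)
  then show ?thesis
    using rescale_segment z cd by simp
qed

lemma rescale_maps_open_segment: "z \<in> {c<..<d} \<Longrightarrow> rescale c d h z \<in> {c<..<d}"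
  using rescale_strict_segment[of c z] rescale_strict_segment[of z d] cd
    rescale_below[of c] rescale_above[of d]
  by auto

lemma continuous_on_rescale: "continuous_on {0..1} (rescale c d h)"
proof -
  have left: "continuous_on {0..c} (rescale c d h)"
    by (rule continuous_on_eq[of _ "\<lambda>z. z"]) (auto simp: rescale_below)
  have right: "continuous_on {d..1} (rescale c d h)"
    by (rule continuous_on_eq[of _ "\<lambda>z. z"]) (auto simp: rescale_above)
  have middle: "continuous_on {c..d} (rescale c d h)"
  proof (rule continuous_on_eq)
    have "continuous_on {c..d} (\<lambda>z. h ((z - c) / (d - c)))"
    proof (rule continuous_on_compose2[of "{0..1}" h])
      show "continuous_on {0..1} h"
        using h by (simp add: interval_homeos_def)
      show "continuous_on {c..d} (\<lambda>z. (z - c) / (d - c))"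
        using cd by (intro continuous_intros) auto
    qed (use normalize_segment in blast)
    then show "continuous_on {c..d} (\<lambda>z. c + (d - c) * h ((z - c) / (d - c)))"
      by (intro continuous_intros)
  qed (simp add: rescale_segment)
  have "{0..1} = {0..c} \<union> {c..d} \<union> {d..(1::real)}"
    using cd by auto
  then show ?thesis
    using left middle right by (simp only:) (intro continuous_on_closed_Un closed_Un; simp)
qed

lemma strict_mono_on_rescale: "strict_mono_on {0..1} (rescale c d h)"
proof (rule strict_mono_onI)
  fix z1 z2 :: real assume z: "z1 \<in> {0..1}" "z2 \<in> {0..1}" "z1 < z2"
  have above_c: "c \<le> rescale c d h z" if "c \<le> z" for z
    using rescale_maps_segment[of z] rescale_above[of z] that by (cases "z \<le> d") auto
  have below_d: "rescale c d h z \<le> d" if "z \<le> d" for z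
    using rescale_maps_segment[of z] rescale_below[of z] that by (cases "c \<le> z") auto
  consider "z2 \<le> c" | "d \<le> z1" | "z1 < c" "c < z2" | "c \<le> z1" "z1 < d" "d < z2" | "c \<le> z1" "z2 \<le> d"
    by linarith
  then show "rescale c d h z1 < rescale c d h z2"
  proof cases
    case 3
    then show ?thesis
      using rescale_below[of z1] above_c[of z2] by simp
  next
    case 4
    then show ?thesis
      using below_d[of z1] rescale_above[of z2] by simp
  next
    case 5
    then show ?thesis
      using rescale_strict_segment z by simp
  qed (use z rescale_below rescale_above in auto)
qed

lemma rescale_in_interval_homeos:
  assumes C: "C \<inter> {c<..<d} = {}"
    and D: "\<And>z. z \<in> {c<..<d} \<Longrightarrow> rescale c d h z \<in> D \<longleftrightarrow> z \<in> D"
  shows "rescale c d h \<in> interval_homeos C D"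
proof -
  have "rescale c d h \<in> interval_homeos {0, 1} {}"
    using continuous_on_rescale strict_mono_on_rescale rescale_below[of 0] rescale_above[of 1] cd
    by (intro in_interval_homeos_0_1I) auto
  moreover have "rescale c d h x = x" if "x \<in> C" for x
    using C that rescale_outside by blast
  moreover have "rescale c d h x \<in> D \<longleftrightarrow> x \<in> D" for x
    using D rescale_outside by (cases "x \<in> {c<..<d}") auto
  ultimately show ?thesis
    by (simp add: interval_homeos_def)
qed

end

lemma interval_homeos_transitive_on_gap:
  assumes cd: "0 \<le> c" "d \<le> 1" and x: "x \<in> {c<..<d}" and y: "y \<in> {c<..<d}"
    and C: "C \<inter> {c<..<d} = {}" and D: "D \<inter> {c<..<d} = {}"
  shows "\<exists>\<phi>\<in>interval_homeos C D. \<phi> x = y"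
proof -
  have "c < d"
    using x by simp
  define u where "u = (x - c) / (d - c)"
  define v where "v = (y - c) / (d - c)"
  have u: "u \<in> {0<..<1}" and v: "v \<in> {0<..<1}"
    using x y \<open>c < d\<close> by (auto simp: u_def v_def field_simps)
  define l where "l = exp (logit v - logit u)"
  have l: "l > 0"
    by (simp add: l_def)
  interpret rescaling c d "odds_scaling l"
    using cd \<open>c < d\<close> odds_scaling_in_interval_homeos[OF l] by unfold_locales auto
  have "rescale c d (odds_scaling l) \<in> interval_homeos C D"
    using C D rescale_maps_open_segment by (intro rescale_in_interval_homeos) blast+
  moreover have "rescale c d (odds_scaling l) x = c + (d - c) * odds_scaling l u"
    using rescale_segment x by (simp add: u_def)
  then have "rescale c d (odds_scaling l) x = y"
    using odds_scaling_logit_diff[OF u v] \<open>c < d\<close> by (simp add: l_def v_def)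
  ultimately show ?thesis
    by blast
qed

lemma Ints_add_left_iff: "a \<in> \<int> \<Longrightarrow> a + x \<in> \<int> \<longleftrightarrow> (x :: real) \<in> \<int>"
  using Ints_diff[of "a + x" a] Ints_add[of a x] by auto

lemma of_int_floor_less_not_Ints: "(x :: real) \<notin> \<int> \<Longrightarrow> of_int \<lfloor>x\<rfloor> < x"
  using frac_gt_0_iff[of x] by (simp add: frac_def)

lemma not_Ints_between: "of_int a < r \<Longrightarrow> r < of_int a + 1 \<Longrightarrow> (r :: real) \<notin> \<int>"
  by (auto elim!: Ints_cases)

section \<open>Groups of every finite height\<close>

definition grid :: "nat \<Rightarrow> real set" where
  "grid m = (\<lambda>i. real i / real m) ` {..m}"

definition marks :: "nat \<Rightarrow> bool \<Rightarrow> real set" where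
  "marks m b = (if b then {x. 0 < x \<and> x < 1 / real m \<and> logit (real m * x) \<in> \<int>} else {})"

context
  fixes m :: nat
  assumes m: "m \<ge> 1"
begin

lemma grid_subset_unit_interval: "grid m \<subseteq> {0..1}"
  using m by (auto simp: grid_def field_simps)

lemma zero_in_grid: "0 \<in> grid m"
  by (auto simp: grid_def image_iff intro!: bexI[of _ 0])

lemma grid_point_in_grid: "i \<le> m \<Longrightarrow> real i / real m \<in> grid m"
  by (auto simp: grid_def)

lemma finite_grid: "finite (grid m)"
  by (simp add: grid_def)

lemma grid_Int_cell: "grid m \<inter> {real i / real m <..< real (Suc i) / real m} = {}"
proof -
  have "False" if "real i / real m < real j / real m" "real j / real m < real (Suc i) / real m" for j
  proof -
    have "real i < real j" "real j < real (Suc i)"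
      using that m by (simp_all add: divide_less_cancel)
    then show False
      by simp
  qed
  then show ?thesis
    by (auto simp: grid_def)
qed

lemma marks_subset_first_cell: "marks m b \<subseteq> {0<..<1 / real m}"
  by (auto simp: marks_def split: if_splits)

lemma marks_subset_unit_interval: "marks m b \<subseteq> {0..1}"
proof -
  have "1 / real m \<le> 1"
    using m by simp
  then show ?thesis
    using marks_subset_first_cell[of b] by fastforce
qed

lemma scale_first_cell: "x \<in> {0<..<1 / real m} \<Longrightarrow> real m * x \<in> {0<..<1}"
  using m by (auto simp: field_simps)

lemma rescale_first_cell:
  assumes "h \<in> interval_homeos {0, 1} {}" "x \<in> {0..1 / real m}"
  shows "rescale 0 (1 / real m) h x = h (real m * x) / real m"
proof -
  interpret rescaling 0 "1 / real m" h
    using m assms(1) by unfold_locales auto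
  show ?thesis
    using rescale_segment[of x] assms(2) m by (simp add: field_simps)
qed

text \<open>In logit coordinates of the first cell this is a translation by an integer, hence it
  preserves the marks.\<close>
lemma shift_in_interval_homeos:
  assumes l: "l > 0" "ln l \<in> \<int>"
  shows "rescale 0 (1 / real m) (odds_scaling l) \<in> interval_homeos (grid m) (marks m b)"
proof -
  interpret rescaling 0 "1 / real m" "odds_scaling l"
    using m odds_scaling_in_interval_homeos[OF l(1)] by unfold_locales auto
  show ?thesis
  proof (rule rescale_in_interval_homeos)
    show "grid m \<inter> {0<..<1 / real m} = {}"
      using grid_Int_cell[of 0] by simp
  next
    fix z assume z: "z \<in> {0<..<1 / real m}"
    have "rescale 0 (1 / real m) (odds_scaling l) z \<in> {0<..<1 / real m}"
      using rescale_maps_open_segment z by simp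
    moreover have "real m * rescale 0 (1 / real m) (odds_scaling l) z = odds_scaling l (real m * z)"
      using rescale_first_cell[OF odds_scaling_in_interval_homeos[OF l(1)], of z] z m by simp
    moreover have "logit (odds_scaling l (real m * z)) = ln l + logit (real m * z)"
      using logit_odds_scaling[OF l(1) scale_first_cell[OF z]] .
    ultimately show "rescale 0 (1 / real m) (odds_scaling l) z \<in> marks m b \<longleftrightarrow> z \<in> marks m b"
      using z Ints_add_left_iff[OF l(2)] by (simp add: marks_def)
  qed
qed

lemma interval_homeos_transitive_on_marks:
  assumes x: "x \<in> marks m b" and y: "y \<in> marks m b"
  shows "\<exists>\<phi>\<in>interval_homeos (grid m) (marks m b). \<phi> x = y"
proof -
  have xr: "x \<in> {0<..<1 / real m}" and yr: "y \<in> {0<..<1 / real m}"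
    using x y marks_subset_first_cell[of b] by blast+
  define u where "u = real m * x"
  define v where "v = real m * y"
  have u: "u \<in> {0<..<1}" and v: "v \<in> {0<..<1}"
    using scale_first_cell xr yr by (auto simp: u_def v_def)
  define l where "l = exp (logit v - logit u)"
  have l: "l > 0"
    by (simp add: l_def)
  have "logit u \<in> \<int>" "logit v \<in> \<int>"
    using x y by (auto simp: marks_def u_def v_def split: if_splits)
  then have lZ: "ln l \<in> \<int>"
    by (simp add: l_def Ints_diff)
  have "odds_scaling l u = v"
    using odds_scaling_logit_diff[OF u v] by (simp add: l_def)
  then have "rescale 0 (1 / real m) (odds_scaling l) x = y"
    using rescale_first_cell[OF odds_scaling_in_interval_homeos[OF l], of x] xr m
    by (simp add: u_def v_def)
  then show ?thesis
    using shift_in_interval_homeos[OF l lZ] by blast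
qed

lemma mem_logistic_cell_iff:
  assumes z: "z \<in> {0<..<1 / real m}"
  shows "z \<in> {logistic k / real m <..< logistic (k + 1) / real m}
    \<longleftrightarrow> k < logit (real m * z) \<and> logit (real m * z) < k + 1"
proof -
  have mz: "real m * z \<in> {0<..<1}"
    using scale_first_cell[OF z] .
  have "z \<in> {logistic k / real m <..< logistic (k + 1) / real m}
      \<longleftrightarrow> logistic k < real m * z \<and> real m * z < logistic (k + 1)"
    using m by (auto simp: field_simps)
  also have "\<dots> \<longleftrightarrow> logit (logistic k) < logit (real m * z) \<and> logit (real m * z) < logit (logistic (k + 1))"
    using logit_less_iff[OF logistic_in_unit_interval mz] logit_less_iff[OF mz logistic_in_unit_interval]
    by simp
  finally show ?thesis
    by simp
qed

lemma logistic_cell_subset_first_cell: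
  "{logistic k / real m <..< logistic (k + 1) / real m} \<subseteq> {0<..<1 / real m}"
proof -
  have "0 < logistic k" "logistic (k + 1) < 1"
    using logistic_in_unit_interval by (simp_all add: greaterThanLessThan_iff)
  then have "0 \<le> logistic k / real m" "logistic (k + 1) / real m \<le> 1 / real m"
    using m by (simp_all add: divide_right_mono)
  then show ?thesis
    by auto
qed

lemma interval_homeos_transitive_on_unmarked:
  assumes x: "x \<in> {0<..<1 / real m} - marks m True" and y: "y \<in> {0<..<1 / real m} - marks m True"
  shows "\<exists>\<phi>\<in>interval_homeos (grid m) (marks m True). \<phi> x = y"
proof -
  let ?k = "\<lfloor>logit (real m * y)\<rfloor>" and ?a = "\<lfloor>logit (real m * x)\<rfloor>"
  let ?cell = "{logistic ?k / real m <..< logistic (?k + 1) / real m}"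
  have xr: "x \<in> {0<..<1 / real m}" and yr: "y \<in> {0<..<1 / real m}"
    using x y by auto
  have "logit (real m * x) \<notin> \<int>" "logit (real m * y) \<notin> \<int>"
    using x y by (auto simp: marks_def)
  then have floors: "of_int ?a < logit (real m * x)" "logit (real m * x) < of_int ?a + 1"
    "of_int ?k < logit (real m * y)" "logit (real m * y) < of_int ?k + 1"
    using of_int_floor_less_not_Ints by auto
  define l :: real where "l = exp (of_int (?k - ?a))"
  have l: "l > 0" "ln l \<in> \<int>"
    by (simp_all add: l_def)
  define x' where "x' = rescale 0 (1 / real m) (odds_scaling l) x"
  have shift: "rescale 0 (1 / real m) (odds_scaling l) \<in> interval_homeos (grid m) (marks m True)"
    using shift_in_interval_homeos[OF l] .
  have mx': "real m * x' = odds_scaling l (real m * x)"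
    using rescale_first_cell[OF odds_scaling_in_interval_homeos[OF l(1)], of x] xr m
    by (simp add: x'_def)
  have "odds_scaling l (real m * x) \<in> {0<..<1}"
    using odds_scaling_in_open_unit_interval[OF l(1) scale_first_cell[OF xr]] .
  then have "0 < real m * x'" "real m * x' < 1"
    using mx' by simp_all
  then have x'r: "x' \<in> {0<..<1 / real m}"
    using m by (simp add: zero_less_mult_iff less_divide_eq mult.commute)
  have "logit (real m * x') = logit (real m * x) + of_int (?k - ?a)"
    using logit_odds_scaling[OF l(1) scale_first_cell[OF xr]] mx' by (simp add: l_def)
  then have "of_int ?k < logit (real m * x') \<and> logit (real m * x') < of_int ?k + 1"
    using floors by linarith
  then have "x' \<in> ?cell"
    using mem_logistic_cell_iff[OF x'r] by simp
  moreover have "y \<in> ?cell"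
    using mem_logistic_cell_iff[OF yr] floors by simp
  moreover have "marks m True \<inter> ?cell = {}"
    using mem_logistic_cell_iff logistic_cell_subset_first_cell not_Ints_between
    by (fastforce simp: marks_def)
  moreover have "grid m \<inter> ?cell = {}"
    using grid_Int_cell[of 0] logistic_cell_subset_first_cell by auto
  moreover have "0 \<le> logistic ?k / real m" "logistic (?k + 1) / real m \<le> 1"
    using logistic_in_unit_interval[of ?k] logistic_in_unit_interval[of "?k + 1"] m
    by (auto simp: field_simps)
  ultimately obtain \<phi> where "\<phi> \<in> interval_homeos (grid m) (marks m True)" "\<phi> x' = y"
    using interval_homeos_transitive_on_gap by metis
  then show ?thesis
    using interval_homeos_comp[OF _ shift] by (metis comp_apply x'_def)
qed

lemma interval_homeos_transitive_on_cell:
  assumes i: "i < m" "\<not> (b \<and> i = 0)"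
    and x: "x \<in> {real i / real m <..< real (Suc i) / real m}"
    and y: "y \<in> {real i / real m <..< real (Suc i) / real m}"
  shows "\<exists>\<phi>\<in>interval_homeos (grid m) (marks m b). \<phi> x = y"
proof (rule interval_homeos_transitive_on_gap[OF _ _ x y grid_Int_cell])
  show "real (Suc i) / real m \<le> 1"
    using i m by (simp add: field_simps)
  show "marks m b \<inter> {real i / real m <..< real (Suc i) / real m} = {}"
  proof (cases b)
    case True
    then have "1 / real m \<le> real i / real m"
      using i m by (simp add: divide_right_mono)
    then show ?thesis
      using marks_subset_first_cell[of b] by auto
  qed (simp add: marks_def)
qed simp

end

definition orbit_blocks :: "nat \<Rightarrow> bool \<Rightarrow> real set set" where
  "orbit_blocks m b = (\<lambda>c. {c}) ` grid m
     \<union> (\<lambda>i. {real i / real m <..< real (Suc i) / real m}) ` {i. i < m \<and> \<not> (b \<and> i = 0)}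
     \<union> (if b then {marks m b, {0<..<1 / real m} - marks m b} else {})"

context
  fixes m :: nat and b :: bool
  assumes m: "m \<ge> 1"
begin

lemma finite_orbit_blocks: "finite (orbit_blocks m b)"
  by (simp add: orbit_blocks_def grid_def)

lemma card_orbit_blocks: "card (orbit_blocks m b) \<le> 2 * m + 1 + (if b then 1 else 0)"
proof -
  let ?I = "{i. i < m \<and> \<not> (b \<and> i = 0)}"
  let ?points = "(\<lambda>c. {c}) ` grid m"
  let ?cells = "(\<lambda>i. {real i / real m <..< real (Suc i) / real m}) ` ?I"
  let ?first = "if b then {marks m b, {0<..<1 / real m} - marks m b} else {}"
  have "card ?points \<le> m + 1"
    using card_image_le[OF finite_grid[OF m], of "\<lambda>c. {c}"] card_image_le[of "{..m}" "\<lambda>i. real i / real m"]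
    by (simp add: grid_def)
  moreover have "card ?cells + (if b then 1 else 0) \<le> m"
  proof (cases b)
    case True
    then have "?I \<subseteq> {1..<m}"
      by auto
    then have "card ?cells \<le> card {1..<m}"
      by (meson card_image_le card_mono finite_atLeastLessThan le_trans finite_subset)
    then show ?thesis
      using True m by simp
  next
    case False
    then have "?I = {..<m}"
      by auto
    then show ?thesis
      using False card_image_le[of "{..<m}"] by simp
  qed
  moreover have "card ?first \<le> (if b then 2 else 0)"
    by (cases b) (auto simp: card_insert_if)
  moreover have "card (orbit_blocks m b) \<le> card ?points + card ?cells + card ?first"
    unfolding orbit_blocks_def by (meson card_Un_le add_right_mono order_trans)
  ultimately show ?thesis
    by (cases b) auto
qed

lemma unit_interval_subset_orbit_blocks: "{0..1} \<subseteq> \<Union>(orbit_blocks m b)"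
proof
  fix x :: real assume x: "x \<in> {0..1}"
  define i where "i = nat \<lfloor>real m * x\<rfloor>"
  have mx: "0 \<le> real m * x" "real m * x \<le> real m"
    using x m by (auto simp: mult_le_cancel_left1)
  then have i: "real i \<le> real m * x" "real m * x < real i + 1"
    by (simp_all add: i_def)
  show "x \<in> \<Union>(orbit_blocks m b)"
  proof (cases "real i = real m * x")
    case True
    then have "real i \<le> real m"
      using mx by linarith
    moreover have "x = real i / real m"
      using True m by (simp add: field_simps)
    ultimately have "x = real i / real m" "i \<le> m"
      by simp_all
    then have "x \<in> grid m"
      by (simp add: grid_point_in_grid[OF m])
    then show ?thesis
      by (auto simp: orbit_blocks_def)
  next
    case False
    then have "i < m"
      using i mx by linarith
    moreover have x_cell: "x \<in> {real i / real m <..< real (Suc i) / real m}"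
      using i False m by (auto simp: field_simps)
    ultimately show ?thesis
      by (cases "b \<and> i = 0"; cases "x \<in> marks m b") (auto simp: orbit_blocks_def)
  qed
qed

lemma orbit_blocks_transitive:
  assumes "B \<in> orbit_blocks m b" "x \<in> B" "y \<in> B"
  shows "\<exists>\<phi>\<in>interval_homeos (grid m) (marks m b). \<phi> x = y"
proof -
  consider c where "B = {c}"
    | i where "i < m" "\<not> (b \<and> i = 0)" "B = {real i / real m <..< real (Suc i) / real m}"
    | "b" "B = marks m b" | "b" "B = {0<..<1 / real m} - marks m b"
    using assms(1) unfolding orbit_blocks_def by (auto split: if_splits)
  then show ?thesis
  proof cases
    case 1
    then show ?thesis
      using assms interval_homeos_id by fastforce
  next
    case 2
    then show ?thesis
      using assms interval_homeos_transitive_on_cell[OF m] by simp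
  next
    case 3
    then show ?thesis
      using assms interval_homeos_transitive_on_marks[OF m] by simp
  next
    case 4
    then show ?thesis
      using assms interval_homeos_transitive_on_unmarked[OF m] by simp
  qed
qed

lemma height_grid_le: "height {0..1} (interval_homeos (grid m) (marks m b)) \<le> enat (2 * m + (if b then 1 else 0))"
proof -
  have "height {0..1} (interval_homeos (grid m) (marks m b)) \<le> enat (card (orbit_blocks m b) - 1)"
    using finite_orbit_blocks unit_interval_subset_orbit_blocks orbit_blocks_transitive
    by (rule height_le_card_orbit_blocks)
  also have "\<dots> \<le> enat (2 * m + (if b then 1 else 0))"
    using card_orbit_blocks by simp
  finally show ?thesis .
qed

lemma closed_invariant_grid_subset:
  assumes "S \<subseteq> grid m" "S \<noteq> {}"
  shows "closedin (top_of_set {0..1}) S" "invariant_set (interval_homeos (grid m) (marks m b)) S"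
proof -
  have "finite S"
    using assms(1) finite_grid[OF m] finite_subset by blast
  then show "closedin (top_of_set {0..1}) S"
    using assms(1) grid_subset_unit_interval[OF m] by (intro closed_subset finite_imp_closed) auto
  show "invariant_set (interval_homeos (grid m) (marks m b)) S"
    using assms by (auto simp: invariant_set_def interval_homeos_def)
qed

lemma closed_invariant_grid_Un_segment:
  assumes c: "c \<in> grid m"
  shows "closedin (top_of_set {0..1}) (grid m \<union> {0..c})"
    "invariant_set (interval_homeos (grid m) (marks m b)) (grid m \<union> {0..c})"
proof -
  have c1: "c \<in> {0..1}"
    using c grid_subset_unit_interval[OF m] by blast
  show "closedin (top_of_set {0..1}) (grid m \<union> {0..c})"
    using finite_grid[OF m] grid_subset_unit_interval[OF m] c1
    by (intro closed_subset closed_Un finite_imp_closed closed_atLeastAtMost) auto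
  have "\<phi> x \<in> grid m \<union> {0..c}" if \<phi>: "\<phi> \<in> interval_homeos (grid m) (marks m b)"
    and x: "x \<in> {0..c}" for \<phi> x
  proof -
    have "x \<in> {0..1}"
      using x c1 by auto
    then have "\<phi> x \<le> \<phi> c" "0 \<le> \<phi> x"
      using interval_homeos_mono[OF \<phi> _ c1] interval_homeos_maps_into[OF \<phi>] x by auto
    moreover have "\<phi> c = c"
      using \<phi> c by (simp add: interval_homeos_def)
    ultimately show ?thesis
      by simp
  qed
  moreover have "\<phi> x = x" if "\<phi> \<in> interval_homeos (grid m) (marks m b)" "x \<in> grid m" for \<phi> x
    using that by (simp add: interval_homeos_def)
  ultimately show "invariant_set (interval_homeos (grid m) (marks m b)) (grid m \<union> {0..c})"
    using c unfolding invariant_set_def by fastforce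
qed

lemma closed_grid_Un_marks: "closed (grid m \<union> marks m b)"
proof (cases b)
  case True
  let ?cell = "{0<..<1 / real m}"
  have "continuous_on ?cell (\<lambda>z. real m * z / (1 - real m * z))"
    using scale_first_cell[OF m] by (intro continuous_intros) (fastforce simp: greaterThanLessThan_iff)
  moreover have "\<forall>z\<in>?cell. real m * z / (1 - real m * z) \<noteq> 0"
  proof
    fix z assume "z \<in> ?cell"
    then have "real m * z \<in> {0<..<1}"
      by (rule scale_first_cell[OF m])
    then have "0 < real m * z / (1 - real m * z)"
      by (intro divide_pos_pos) simp_all
    then show "real m * z / (1 - real m * z) \<noteq> 0"
      by linarith
  qed
  ultimately have "continuous_on ?cell (\<lambda>z. logit (real m * z))"
    unfolding logit_def by (rule continuous_on_ln)
  then have "closedin (top_of_set ?cell) (?cell \<inter> (\<lambda>z. logit (real m * z)) -` \<int>)"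
    by (rule continuous_closedin_preimage) (rule closed_Ints)
  moreover have "marks m b = ?cell \<inter> (\<lambda>z. logit (real m * z)) -` \<int>"
    using True by (auto simp: marks_def)
  ultimately obtain K where K: "closed K" "marks m b = ?cell \<inter> K"
    by (auto simp: closedin_closed)
  have "0 \<in> grid m" "1 / real m \<in> grid m"
    using zero_in_grid grid_point_in_grid[OF m, of 1] m by simp_all
  then have "grid m \<union> marks m b = grid m \<union> ({0..1 / real m} \<inter> K)"
    using K(2) by (auto simp: le_less)
  then show ?thesis
    using K(1) finite_grid[OF m] by (simp add: closed_Un closed_Int finite_imp_closed)
qed (simp add: marks_def finite_grid[OF m] finite_imp_closed)

lemma closed_invariant_grid_Un_marks:
  "closedin (top_of_set {0..1}) (grid m \<union> marks m b)"
  "invariant_set (interval_homeos (grid m) (marks m b)) (grid m \<union> marks m b)"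
proof -
  show "closedin (top_of_set {0..1}) (grid m \<union> marks m b)"
    using closed_grid_Un_marks grid_subset_unit_interval[OF m] marks_subset_unit_interval[OF m]
    by (intro closed_subset) auto
  have "\<phi> x \<in> marks m b" if "\<phi> \<in> interval_homeos (grid m) (marks m b)" "x \<in> marks m b" for \<phi> x
    using that marks_subset_unit_interval[OF m, of b] by (auto simp: interval_homeos_def)
  moreover have "\<phi> x = x" if "\<phi> \<in> interval_homeos (grid m) (marks m b)" "x \<in> grid m" for \<phi> x
    using that by (simp add: interval_homeos_def)
  ultimately show "invariant_set (interval_homeos (grid m) (marks m b)) (grid m \<union> marks m b)"
    using zero_in_grid[OF m] unfolding invariant_set_def by fastforce
qed

lemma invariant_chain_grid_prefix:
  assumes "i \<le> m"
  shows "\<exists>Y. invariant_chain {0..1} (interval_homeos (grid m) (marks m b)) i Y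
    \<and> Y i = (\<lambda>j. real j / real m) ` {..i}"
  using assms
proof (induction i)
  case 0
  have "{0} \<subseteq> grid m"
    using zero_in_grid[OF m] by simp
  then show ?case
    using closed_invariant_grid_subset[of "{0}"] by (intro invariant_chain_0) auto
next
  case (Suc i)
  let ?P = "\<lambda>i. (\<lambda>j. real j / real m) ` {..i}"
  have "real (Suc i) / real m \<notin> ?P i"
    using m by (auto simp: divide_cancel_right)
  then have "?P i \<subset> ?P (Suc i)"
    by (auto simp: atMost_Suc)
  moreover have "?P (Suc i) \<subseteq> grid m"
    using Suc.prems by (auto simp: grid_def)
  ultimately show ?case
    using Suc closed_invariant_grid_subset[of "?P (Suc i)"] grid_subset_unit_interval[OF m]
    by (intro invariant_chain_Suc) auto
qed

lemma invariant_chain_grid_Un_marks: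
  "\<exists>Y. invariant_chain {0..1} (interval_homeos (grid m) (marks m b)) (m + (if b then 1 else 0)) Y
    \<and> Y (m + (if b then 1 else 0)) = grid m \<union> marks m b"
proof -
  have grid: "\<exists>Y. invariant_chain {0..1} (interval_homeos (grid m) (marks m b)) m Y \<and> Y m = grid m"
    using invariant_chain_grid_prefix[of m] by (simp add: grid_def)
  show ?thesis
  proof (cases b)
    case True
    define p where "p = 1 / (2 * real m)"
    have p: "p \<in> {0<..<1 / real m}"
      using m by (auto simp: p_def field_simps)
    have "logit (real m * p) = 0"
      using m by (simp add: p_def logit_def)
    then have "p \<in> marks m b - grid m"
      using True p grid_Int_cell[OF m, of 0] by (auto simp: marks_def)
    then have "grid m \<subset> grid m \<union> marks m b"
      by blast
    then show ?thesis
      using True invariant_chain_Suc[OF grid] closed_invariant_grid_Un_marks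
        grid_subset_unit_interval[OF m] marks_subset_unit_interval[OF m]
      by simp
  qed (use grid in \<open>simp add: marks_def\<close>)
qed

lemma invariant_chain_grid_Un_segment:
  assumes "k < m"
  shows "\<exists>Y. invariant_chain {0..1} (interval_homeos (grid m) (marks m b)) (m + (if b then 1 else 0) + Suc k) Y
    \<and> Y (m + (if b then 1 else 0) + Suc k) = grid m \<union> {0..real (Suc k) / real m}"
  using assms
proof (induction k)
  case 0
  define p where "p = logistic (1/2) / real m"
  have p: "p \<in> {0<..<1 / real m}"
    using logistic_in_unit_interval[of "1/2"] m by (auto simp: p_def divide_strict_right_mono)
  have half: "logit (real m * p) = 1/2"
    using m by (simp add: p_def)
  have "logit (real m * p) \<notin> \<int>"
    unfolding half using not_Ints_between[of 0 "1/2"] by simp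
  then have "p \<notin> marks m b"
    by (simp add: marks_def)
  moreover have "p \<notin> grid m"
    using p grid_Int_cell[OF m, of 0] by auto
  moreover have "marks m b \<subseteq> {0..1 / real m}"
    using marks_subset_first_cell[OF m, of b] by auto
  ultimately have "grid m \<union> marks m b \<subset> grid m \<union> {0..real (Suc 0) / real m}"
    using p by auto
  moreover have "1 / real m \<in> grid m"
    using grid_point_in_grid[OF m, of 1] m by simp
  ultimately show ?case
    using invariant_chain_Suc[OF invariant_chain_grid_Un_marks]
      closed_invariant_grid_Un_segment[where c = "1 / real m"] grid_subset_unit_interval[OF m] m
    by simp
next
  case (Suc k)
  define p where "p = (real k + 3/2) / real m"
  have p: "p \<in> {real (Suc k) / real m <..< real (Suc (Suc k)) / real m}"
    using m by (auto simp: p_def divide_strict_right_mono)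
  then have "p \<notin> grid m \<union> {0..real (Suc k) / real m}"
    using grid_Int_cell[OF m, of "Suc k"] by auto
  moreover have "real (Suc k) / real m \<le> real (Suc (Suc k)) / real m"
    using m by (simp add: divide_right_mono)
  moreover have "0 \<le> p"
    using m by (simp add: p_def)
  ultimately have "grid m \<union> {0..real (Suc k) / real m} \<subset> grid m \<union> {0..real (Suc (Suc k)) / real m}"
    using p by auto
  moreover have "real (Suc (Suc k)) / real m \<in> grid m" "real (Suc (Suc k)) / real m \<le> 1"
    using Suc.prems grid_point_in_grid[OF m, of "Suc (Suc k)"] m by simp_all
  moreover have "\<exists>Y. invariant_chain {0..1} (interval_homeos (grid m) (marks m b)) (m + (if b then 1 else 0) + Suc k) Y
    \<and> Y (m + (if b then 1 else 0) + Suc k) = grid m \<union> {0..real (Suc k) / real m}"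
    using Suc by simp
  ultimately have "\<exists>Y. invariant_chain {0..1} (interval_homeos (grid m) (marks m b)) (Suc (m + (if b then 1 else 0) + Suc k)) Y
    \<and> Y (Suc (m + (if b then 1 else 0) + Suc k)) = grid m \<union> {0..real (Suc (Suc k)) / real m}"
    using closed_invariant_grid_Un_segment[where c = "real (Suc (Suc k)) / real m"]
      grid_subset_unit_interval[OF m]
    by (intro invariant_chain_Suc) auto
  then show ?case
    by simp
qed

lemma height_grid: "height {0..1} (interval_homeos (grid m) (marks m b)) = enat (2 * m + (if b then 1 else 0))"
proof (rule antisym)
  obtain k where k: "m = Suc k"
    using m by (cases m) auto
  then have idx: "m + (if b then 1 else 0) + Suc k = 2 * m + (if b then 1 else 0)"
    by simp
  obtain Y where "invariant_chain {0..1} (interval_homeos (grid m) (marks m b)) (m + (if b then 1 else 0) + Suc k) Y"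
    "Y (m + (if b then 1 else 0) + Suc k) = grid m \<union> {0..real (Suc k) / real m}"
    using invariant_chain_grid_Un_segment[of k] k by blast
  then have chain: "invariant_chain {0..1} (interval_homeos (grid m) (marks m b)) (2 * m + (if b then 1 else 0)) Y"
    and "Y (2 * m + (if b then 1 else 0)) = grid m \<union> {0..real (Suc k) / real m}"
    by (simp_all only: idx)
  moreover have "grid m \<union> {0..real (Suc k) / real m} = {0..1}"
    using k grid_subset_unit_interval[OF m] by auto
  ultimately have "Y (2 * m + (if b then 1 else 0)) = {0..1}"
    by simp
  with chain show "enat (2 * m + (if b then 1 else 0)) \<le> height {0..1} (interval_homeos (grid m) (marks m b))"
    by (rule enat_le_height)
qed (rule height_grid_le)

end

lemma infinite_star_graph: "n > 0 \<Longrightarrow> infinite (star_graph n)"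
  using arm_subset_star_graph[of 0 n] finite_subset by (fastforce simp: arm_def)

lemma infinity_in_P_h_star_graph: "n > 0 \<Longrightarrow> \<infinity> \<in> P_h (star_graph n)"
  using height_identity[OF infinite_star_graph] homeo_subgroup_identity
  unfolding P_h_def by (metis (mono_tags, lifting) mem_Collect_eq)

lemma enat_in_P_h_star_graph:
  assumes n: "n > 0" and k: "k \<ge> 2"
  shows "enat k \<in> P_h (star_graph n)"
proof -
  let ?\<Phi> = "interval_homeos (grid (k div 2)) (marks (k div 2) (odd k))"
  have m: "k div 2 \<ge> 1"
    using k by simp
  have \<Phi>: "interval_group ?\<Phi>"
    by (rule interval_group_interval_homeos[OF grid_subset_unit_interval[OF m]])
  have "height (star_graph n) (radial_group n ?\<Phi>) = enat k"
    using height_radial_group[OF n \<Phi>] height_grid[OF m] by simp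
  then show ?thesis
    using homeo_subgroup_radial_group[OF n \<Phi>]
    unfolding P_h_def by (metis (mono_tags, lifting) mem_Collect_eq)
qed

theorem theorem4p2:
  fixes n :: nat
  assumes "n \<ge> 3"
  shows "P_h (star_graph n) = {enat k | k. k \<ge> 2} \<union> {\<infinity>}"
proof
  show "P_h (star_graph n) \<subseteq> {enat k | k. k \<ge> 2} \<union> {\<infinity>}"
  proof
    fix h assume "h \<in> P_h (star_graph n)"
    then obtain G where "homeo_subgroup (star_graph n) G" "h = height (star_graph n) G"
      by (auto simp: P_h_def)
    then have "enat 2 \<le> h"
      using height_ge_two[OF assms] by simp
    then show "h \<in> {enat k | k. k \<ge> 2} \<union> {\<infinity>}"
      by (cases h) auto
  qed
  show "{enat k | k. k \<ge> 2} \<union> {\<infinity>} \<subseteq> P_h (star_graph n)"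
    using assms infinity_in_P_h_star_graph enat_in_P_h_star_graph by auto
qed

end
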